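(* Let $0\le r\le n$ be integers with $r\neq n-1$, and let $k=\min(r+1,n)$. Then, as $p$ tends to infinity through the primes, $$\lim_{p\to\infty}p^{\binom{k}{2}}\beta^*(n,r;p)=\frac{1}{r!}.$$
   Context: Fix a prime $p$ and let $\mathbb{Z}_p,\mathbb{Q}_p$ be the $p$-adic integers and numbers. A random monic polynomial of degree $n$ reducing to $x^n$ mod $p$ is $f=x^n+a_{n-1}x^{n-1}+\dots+a_0$ with $(a_0,\dots,a_{n-1})$ Haar-distributed on $(p\mathbb{Z}_p)^n$ normalized to total mass $1$. For such $f$ let $X(f)$ be the number of distinct roots of $f$ in $\mathbb{Q}_p$, and define $\beta^*(n,r;p)=\Pr(X=r)$. *)

theory Defs
  imports "HOL-Probability.Probability"
begin

text \<open>p-adic integers are modelled by their base-p digit sequences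
  d :: nat \<Rightarrow> nat with d i < p (bijection with Z_p).  Normalized Haar measure
  on Z_p is the product of uniform measures on the digits {0..<p}; on pZ_p
  it is the same with the 0-th digit forced to be 0.\<close>

definition digit_measure :: "nat \<Rightarrow> nat measure" where
  "digit_measure p = measure_pmf (pmf_of_set {..<p})"

definition pZp_haar :: "nat \<Rightarrow> (nat \<Rightarrow> nat) measure" where
  "pZp_haar p = PiM UNIV (\<lambda>j. if j = 0 then return (count_space UNIV) 0 else digit_measure p)"

definition zp_trunc :: "nat \<Rightarrow> (nat \<Rightarrow> nat) \<Rightarrow> nat \<Rightarrow> int" where
  "zp_trunc p d k = (\<Sum>i<k. int (d i) * int p ^ i)"

definition is_zp_root :: "nat \<Rightarrow> nat \<Rightarrow> (nat \<Rightarrow> nat \<Rightarrow> nat) \<Rightarrow> (nat \<Rightarrow> nat) \<Rightarrow> bool" where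
  "is_zp_root p n a x \<longleftrightarrow> (\<forall>i. x i < p) \<and>
     (\<forall>k. int p ^ k dvd
            (\<Sum>i<n. zp_trunc p (a i) k * zp_trunc p x k ^ i) + zp_trunc p x k ^ n)"

text \<open>Number of distinct roots (all roots in Q_p of such f lie in Z_p).\<close>
definition num_roots :: "nat \<Rightarrow> nat \<Rightarrow> (nat \<Rightarrow> nat \<Rightarrow> nat) \<Rightarrow> nat" where
  "num_roots p n a = card {x. is_zp_root p n a x}"

definition coeff_measure :: "nat \<Rightarrow> nat \<Rightarrow> (nat \<Rightarrow> nat \<Rightarrow> nat) measure" where
  "coeff_measure p n = PiM {..<n} (\<lambda>_. pZp_haar p)"

definition beta_star :: "nat \<Rightarrow> nat \<Rightarrow> nat \<Rightarrow> real" where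
  "beta_star n r p = measure (coeff_measure p n)
      {a \<in> space (coeff_measure p n). num_roots p n a = r}"

end

theory Submission
  imports Defs "HOL-Computational_Algebra.Polynomial" "HOL-Computational_Algebra.Primes"
begin

text \<open>
  Every root of \<open>f\<close> lies in \<open>p\<int>\<^sub>p\<close>, so the roots of \<open>f\<close> correspond to those of
  \<open>g(X) = p\<^sup>-\<^sup>k f(pX)\<close>. If \<open>v\<^sub>p(a\<^sub>j) \<ge> k - j\<close> for all \<open>j < k\<close>, then \<open>g\<close> has integral
  coefficients and reduces modulo \<open>p\<close> to \<open>\<Sum>j<k. c\<^sub>j X\<^sup>j\<close> (plus \<open>X\<^sup>n\<close> if \<open>r = n\<close>), where \<open>c\<^sub>j\<close>
  is the digit of \<open>a\<^sub>j\<close> at position \<open>k - j\<close>. If this reduction is a unit times a product of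
  \<open>r\<close> distinct linear factors, Hensel's lemma yields exactly \<open>r\<close> roots. Conversely, factoring
  \<open>r\<close> distinct roots out of \<open>f\<close> forces the valuation conditions and a reduction of the form
  \<open>\<gamma> \<Prod>(X - \<beta>\<^sub>i)\<close>. These conditions prescribe \<open>(k choose 2) + k\<close> digits, so
  \<open>p\<^bsup>k choose 2\<^esup> \<beta>*\<close> lies between \<open>N/p\<^sup>k\<close> for two counts \<open>N\<close> of digit patterns, both of
  which are \<open>p\<^sup>k/r! (1 + o(1))\<close>.
\<close>

section \<open>Truncations of digit sequences\<close>

lemma zp_trunc_0 [simp]: "zp_trunc p d 0 = 0"
  by (simp add: zp_trunc_def)

lemma zp_trunc_Suc: "zp_trunc p d (Suc k) = zp_trunc p d k + int (d k) * int p ^ k"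
  by (simp add: zp_trunc_def)

lemma zp_trunc_Suc_0 [simp]: "zp_trunc p d (Suc 0) = int (d 0)"
  by (simp add: zp_trunc_def)

lemma zp_trunc_nonneg: "0 \<le> zp_trunc p d k"
  by (induct k) (auto simp: zp_trunc_Suc)

lemma zp_trunc_less: "(\<And>i. i < k \<Longrightarrow> d i < p) \<Longrightarrow> zp_trunc p d k < int p ^ k"
proof (induct k)
  case (Suc k)
  have "int (d k) * int p ^ k \<le> (int p - 1) * int p ^ k"
    using Suc.prems[of k] by (intro mult_right_mono) auto
  then show ?case using Suc by (simp add: zp_trunc_Suc algebra_simps)
qed simp

lemma zp_trunc_cong: "(\<And>i. i < k \<Longrightarrow> d i = d' i) \<Longrightarrow> zp_trunc p d k = zp_trunc p d' k"
  by (simp add: zp_trunc_def)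

lemma zp_trunc_shift: "zp_trunc p x (Suc m) = int (x 0) + int p * zp_trunc p (x \<circ> Suc) m"
  by (induct m) (auto simp: zp_trunc_Suc algebra_simps)

lemma power_dvd_zp_trunc_diff:
  assumes "k \<le> k'"
  shows "int p ^ k dvd zp_trunc p d k' - zp_trunc p d k"
  using assms
proof (induct k' rule: dec_induct)
  case (step m)
  have "int p ^ k dvd int (d m) * int p ^ m"
    using step(1) by (simp add: le_imp_power_dvd)
  with step(3) show ?case
    by (simp add: zp_trunc_Suc) (metis add_diff_eq dvd_add add.commute)
qed simp

lemma zp_trunc_mod:
  assumes "\<forall>i. d i < p" "k \<le> k'"
  shows "zp_trunc p d k' mod int p ^ k = zp_trunc p d k"
proof -
  have "zp_trunc p d k' mod int p ^ k = zp_trunc p d k mod int p ^ k"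
    using power_dvd_zp_trunc_diff[OF assms(2)] by (simp add: mod_eq_dvd_iff)
  also have "\<dots> = zp_trunc p d k"
    using zp_trunc_nonneg zp_trunc_less assms(1) by (simp add: mod_pos_pos_trivial)
  finally show ?thesis .
qed

lemma zp_trunc_digit:
  assumes "\<And>i. i < L \<Longrightarrow> d i < p" "i < L"
  shows "(zp_trunc p d L div int p ^ i) mod int p = int (d i)"
  using assms
proof (induct L arbitrary: i)
  case (Suc L)
  have p: "p > 0" using Suc.prems(1)[of 0] by simp
  show ?case
  proof (cases "i < L")
    case True
    have "L = i + Suc (L - i - 1)" using True by simp
    then have "int p ^ L = int p ^ i * (int p ^ (L - i - 1) * int p)"
      by (metis power_add power_Suc2)
    then have "zp_trunc p d (Suc L) = zp_trunc p d L + (int (d L) * (int p ^ (L - i - 1) * int p)) * int p ^ i"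
      by (simp add: zp_trunc_Suc algebra_simps)
    then have "zp_trunc p d (Suc L) div int p ^ i
        = zp_trunc p d L div int p ^ i + int (d L) * int p ^ (L - i - 1) * int p"
      using p by (simp only: div_mult_self1 power_not_zero) simp
    then show ?thesis using Suc True by simp
  next
    case False
    then have "i = L" using Suc.prems by simp
    moreover have "zp_trunc p d L div int p ^ L = 0"
      using zp_trunc_nonneg zp_trunc_less[of L d p] Suc.prems(1) by (simp add: div_pos_pos_trivial)
    ultimately show ?thesis using p Suc.prems(1)[of L] by (simp add: zp_trunc_Suc)
  qed
qed simp

lemma zp_trunc_eq_imp_digits_eq:
  assumes "\<forall>i. x i < p" "\<forall>i. y i < p" "zp_trunc p x D = zp_trunc p y D" "i < D"
  shows "x i = y i"
  using zp_trunc_digit[of D x p i] zp_trunc_digit[of D y p i] assms by simp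

lemma mod_power_Suc:
  "(t::int) mod int p ^ Suc D = int p ^ D * (t div int p ^ D mod int p) + t mod int p ^ D"
  using mod_mult2_eq'[of t "p ^ D" p] by (simp add: mult.commute)

lemma zp_trunc_digits_of_compatible:
  assumes p: "p > 0" and U: "\<And>m. 0 \<le> U m \<and> U m < int p ^ m"
    and compat: "\<And>m. U (Suc m) mod int p ^ m = U m"
  shows "zp_trunc p (\<lambda>i. nat ((U (Suc i) div int p ^ i) mod int p)) m = U m"
proof (induct m)
  case 0
  then show ?case using U[of 0] by simp
next
  case (Suc m)
  have "U (Suc m) = U (Suc m) mod int p ^ Suc m" using U[of "Suc m"] by simp
  also have "\<dots> = int p ^ m * (U (Suc m) div int p ^ m mod int p) + U (Suc m) mod int p ^ m"
    by (rule mod_power_Suc)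
  also have "U (Suc m) mod int p ^ m = U m" by (rule compat)
  finally show ?case using Suc p by (simp add: zp_trunc_Suc mult.commute)
qed

lemma exists_lift_sequence:
  fixes G :: "nat \<Rightarrow> int \<Rightarrow> bool"
  assumes start: "G m0 t" "0 \<le> t" "t < int p ^ m0"
    and lift: "\<And>m s. m0 \<le> m \<Longrightarrow> G m s \<Longrightarrow> 0 \<le> s \<Longrightarrow> s < int p ^ m \<Longrightarrow>
                 \<exists>d. 0 \<le> d \<and> d < int p \<and> G (Suc m) (s + int p ^ m * d)"
  shows "\<exists>T. T 0 = t \<and> (\<forall>j. G (m0 + j) (T j) \<and> 0 \<le> T j \<and> T j < int p ^ (m0 + j))
    \<and> (\<forall>j. T (Suc j) mod int p ^ (m0 + j) = T j)"
proof -
  define lift_digit where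
    "lift_digit m s = (SOME d. 0 \<le> d \<and> d < int p \<and> G (Suc m) (s + int p ^ m * d))" for m s
  define T where "T = rec_nat t (\<lambda>j s. s + int p ^ (m0 + j) * lift_digit (m0 + j) s)"
  have T: "G (m0 + j) (T j) \<and> 0 \<le> T j \<and> T j < int p ^ (m0 + j)" for j
  proof (induct j)
    case (Suc j)
    let ?d = "lift_digit (m0 + j) (T j)"
    have d: "0 \<le> ?d \<and> ?d < int p \<and> G (Suc (m0 + j)) (T j + int p ^ (m0 + j) * ?d)"
      unfolding lift_digit_def by (rule someI_ex) (use lift Suc in auto)
    have T_Suc: "T (Suc j) = T j + int p ^ (m0 + j) * ?d" by (simp add: T_def)
    have "int p ^ (m0 + j) * ?d \<le> int p ^ (m0 + j) * (int p - 1)"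
      using d by (intro mult_left_mono) auto
    then have "T (Suc j) < int p ^ (m0 + Suc j)" using Suc T_Suc by (simp add: algebra_simps)
    then show ?case using d Suc T_Suc by simp
  qed (use start T_def in simp)
  moreover have "T (Suc j) mod int p ^ (m0 + j) = T j" for j
    using T[of j] by (simp add: T_def)
  moreover have "T 0 = t" by (simp add: T_def)
  ultimately show ?thesis by blast
qed

lemma exists_digits_along_lifts:
  fixes G :: "nat \<Rightarrow> int \<Rightarrow> bool"
  assumes p: "p > 0" and start: "G m0 t" "0 \<le> t" "t < int p ^ m0"
    and lift: "\<And>m s. m0 \<le> m \<Longrightarrow> G m s \<Longrightarrow> 0 \<le> s \<Longrightarrow> s < int p ^ m \<Longrightarrow>
                 \<exists>d. 0 \<le> d \<and> d < int p \<and> G (Suc m) (s + int p ^ m * d)"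
  shows "\<exists>x. (\<forall>i. x i < p) \<and> zp_trunc p x m0 = t \<and> (\<forall>m\<ge>m0. G m (zp_trunc p x m))"
proof -
  obtain T where T0: "T 0 = t" and T: "\<forall>j. G (m0 + j) (T j) \<and> 0 \<le> T j \<and> T j < int p ^ (m0 + j)"
    and T_compat: "\<forall>j. T (Suc j) mod int p ^ (m0 + j) = T j"
    using exists_lift_sequence[OF start lift] by blast
  define U where "U m = T (m - m0) mod int p ^ m" for m
  have U_T: "U m = T (m - m0)" if "m0 \<le> m" for m
    using T[rule_format, of "m - m0"] that by (simp add: U_def)
  have U_bounds: "0 \<le> U m \<and> U m < int p ^ m" for m
    using p by (simp add: U_def)
  have U_compat: "U (Suc m) mod int p ^ m = U m" for m
  proof (cases "m0 \<le> m")
    case True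
    then show ?thesis using U_T[of m] U_T[of "Suc m"] T_compat[rule_format, of "m - m0"] by (simp add: Suc_diff_le)
  next
    case False
    moreover have "int p ^ m dvd int p ^ Suc m" by (simp add: le_imp_power_dvd)
    ultimately show ?thesis by (simp add: U_def mod_mod_cancel)
  qed
  define x where "x i = nat ((U (Suc i) div int p ^ i) mod int p)" for i
  have trunc: "zp_trunc p x m = U m" for m
    unfolding x_def[abs_def] by (rule zp_trunc_digits_of_compatible[OF p U_bounds U_compat])
  have "\<forall>i. x i < p" using p by (simp add: x_def nat_less_iff)
  moreover have "zp_trunc p x m0 = t" using trunc U_T[of m0] T0 by simp
  moreover have "\<forall>m\<ge>m0. G m (zp_trunc p x m)" using trunc U_T T by (metis le_add_diff_inverse)
  ultimately show ?thesis by blast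
qed

section \<open>Congruences of integer polynomials\<close>

lemma eq_if_dvd_diff_less:
  fixes u v :: int
  assumes "0 \<le> u" "u < q" "0 \<le> v" "v < q" "q dvd u - v"
  shows "u = v"
  using assms by (metis mod_eq_dvd_iff mod_pos_pos_trivial)

lemma dvd_diff_cancel_left: "m dvd a \<Longrightarrow> m dvd a - b \<Longrightarrow> m dvd (b::'a::comm_ring_1)"
  using dvd_diff[of m a "a - b"] by simp

lemma dvd_poly_diff: "(u - v) dvd poly P u - poly P (v::'a::comm_ring_1)"
proof (induct P)
  case (pCons c P)
  have "poly (pCons c P) u - poly (pCons c P) v = (u - v) * poly P u + v * (poly P u - poly P v)"
    by (simp add: algebra_simps)
  then show ?case using pCons(2) by simp
qed simp

lemma const_poly_dvd_diff_imp_dvd_poly_diff: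
  fixes P Q :: "'a::comm_ring_1 poly"
  assumes "[:m:] dvd P - Q" "m dvd u - v"
  shows "m dvd poly P u - poly Q v"
proof -
  obtain R where "P - Q = [:m:] * R" using assms(1) by (auto simp: dvd_def)
  then have "m dvd poly (P - Q) u" by simp
  moreover have "m dvd poly Q u - poly Q v" using assms(2) dvd_poly_diff dvd_trans by blast
  ultimately have "m dvd poly (P - Q) u + (poly Q u - poly Q v)" by (rule dvd_add)
  then show ?thesis by simp
qed

lemma const_poly_dvd_pcompose: "[:m:] dvd (P::'a::comm_ring_1 poly) \<Longrightarrow> [:m:] dvd pcompose P Q"
  by (metis dvd_def pcompose_mult pcompose_const)

lemma const_poly_dvd_pderiv: "[:m:] dvd (P::int poly) \<Longrightarrow> [:m:] dvd pderiv P"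
  by (auto simp: const_poly_dvd_iff coeff_pderiv)

lemma const_poly_dvd_const: "[:m:] dvd [:c:] \<longleftrightarrow> m dvd (c::int)"
  by (simp add: const_poly_dvd_iff coeff_pCons split: nat.split)

lemma taylor_dvd: "h\<^sup>2 dvd poly P (u + h) - poly P u - h * poly (pderiv P) (u::'a::idom)"
proof (induct P)
  case (pCons c P)
  obtain e where e: "poly P (u + h) - poly P u - h * poly (pderiv P) u = h\<^sup>2 * e"
    using pCons(2) by (auto simp: dvd_def)
  have "poly (pCons c P) (u + h) - poly (pCons c P) u - h * poly (pderiv (pCons c P)) u
      = (u + h) * (poly P (u + h) - poly P u - h * poly (pderiv P) u) + h\<^sup>2 * poly (pderiv P) u"
    by (simp add: pderiv_pCons algebra_simps power2_eq_square)
  also have "\<dots> = h\<^sup>2 * ((u + h) * e + poly (pderiv P) u)"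
    unfolding e by (simp add: algebra_simps)
  finally show ?case by simp
qed simp

lemma taylor_step_dvd:
  fixes q u d :: "'a::idom"
  assumes "m \<ge> 1"
  shows "q ^ Suc m dvd poly P (u + q ^ m * d) - poly P u - q ^ m * d * poly (pderiv P) u"
proof -
  have "q ^ Suc m dvd q ^ (2 * m)" using assms by (intro le_imp_power_dvd) simp
  also have "q ^ (2 * m) dvd (q ^ m * d)\<^sup>2"
    by (simp add: power_mult_distrib power_mult[symmetric] mult.commute)
  finally show ?thesis using taylor_dvd dvd_trans by blast
qed

lemma hensel_digit_exists:
  fixes q u :: int
  assumes q: "prime q" and m: "m \<ge> 1"
    and unit: "\<not> q dvd poly (pderiv P) u" and root: "q ^ m dvd poly P u"
  shows "\<exists>d. 0 \<le> d \<and> d < q \<and> q ^ Suc m dvd poly P (u + q ^ m * d)"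
proof -
  obtain s where s: "poly P u = q ^ m * s" using root by (auto simp: dvd_def)
  let ?u' = "poly (pderiv P) u"
  have "gcd ?u' q = 1"
    using prime_imp_coprime[OF q unit] by (simp add: coprime_commute)
  then obtain x v where xv: "x * ?u' + v * q = 1" using bezout_int[of ?u' q] by auto
  define d where "d = (- s * x) mod q"
  have d: "0 \<le> d" "d < q" using prime_gt_0_int[OF q] by (auto simp: d_def)
  have "d mod q = (- s * x) mod q" by (simp add: d_def)
  then have "q dvd d - (- s * x)" by (simp only: mod_eq_dvd_iff)
  then obtain w where w: "d = - s * x + q * w" by (auto simp: dvd_def algebra_simps)
  have "poly P u + q ^ m * d * ?u' = q ^ m * (s * (1 - x * ?u') + q * w * ?u')"
    by (simp add: s w algebra_simps)
  also have "1 - x * ?u' = v * q" using xv by simp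
  also have "q ^ m * (s * (v * q) + q * w * ?u') = q ^ Suc m * (s * v + w * ?u')"
    by (simp add: algebra_simps)
  finally have "q ^ Suc m dvd poly P u + q ^ m * d * ?u'" by simp
  from dvd_add[OF taylor_step_dvd[OF m, of q P u d] this]
  have "q ^ Suc m dvd poly P (u + q ^ m * d)" by simp
  with d show ?thesis by blast
qed

lemma hensel_digit_unique:
  fixes q u d d' :: int
  assumes q: "prime q" and m: "m \<ge> 1" and unit: "\<not> q dvd poly (pderiv P) u"
    and d: "0 \<le> d" "d < q" and d': "0 \<le> d'" "d' < q"
    and root: "q ^ Suc m dvd poly P (u + q ^ m * d)" and root': "q ^ Suc m dvd poly P (u + q ^ m * d')"
  shows "d = d'"
proof -
  have "q ^ Suc m dvd (poly P (u + q ^ m * d) - poly P (u + q ^ m * d'))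
      - (poly P (u + q ^ m * d) - poly P u - q ^ m * d * poly (pderiv P) u)
      + (poly P (u + q ^ m * d') - poly P u - q ^ m * d' * poly (pderiv P) u)"
    by (intro dvd_add dvd_diff taylor_step_dvd m root root')
  then have "q ^ m * q dvd q ^ m * ((d - d') * poly (pderiv P) u)"
    by (simp add: algebra_simps)
  then have "q dvd (d - d') * poly (pderiv P) u"
    using prime_gt_0_int[OF q] by simp
  then have "q dvd d - d'" using q unit by (simp add: prime_dvd_mult_iff)
  then show ?thesis using d d' by (rule eq_if_dvd_diff_less[rotated 4])
qed

section \<open>Hensel's lemma for polynomials over \<open>\<int>\<^sub>p\<close>\<close>

text \<open>A polynomial over \<open>\<int>\<^sub>p\<close> is represented by integer polynomials \<open>H m\<close> with
  \<open>H m' \<equiv> H m (mod p^m)\<close> for \<open>m \<le> m'\<close>.\<close>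

definition padic_compatible :: "nat \<Rightarrow> (nat \<Rightarrow> int poly) \<Rightarrow> bool" where
  "padic_compatible p H \<longleftrightarrow> (\<forall>m m'. m \<le> m' \<longrightarrow> [:int p ^ m:] dvd H m' - H m)"

definition padic_root :: "nat \<Rightarrow> (nat \<Rightarrow> int poly) \<Rightarrow> (nat \<Rightarrow> nat) \<Rightarrow> bool" where
  "padic_root p H x \<longleftrightarrow> (\<forall>i. x i < p) \<and> (\<forall>m. int p ^ m dvd poly (H m) (zp_trunc p x m))"

lemma padic_compatible_dvd_mono:
  assumes "padic_compatible p H" "m \<le> m'" "int p ^ m' dvd poly (H m') t" "int p ^ m dvd t - t'"
  shows "int p ^ m dvd poly (H m) t'"
proof -
  have "int p ^ m dvd poly (H m') t" using assms(2,3) by (meson dvd_trans le_imp_power_dvd)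
  moreover have "int p ^ m dvd poly (H m') t - poly (H m) t'"
    using assms by (intro const_poly_dvd_diff_imp_dvd_poly_diff) (auto simp: padic_compatible_def)
  ultimately show ?thesis by (rule dvd_diff_cancel_left)
qed

lemma padic_rootI:
  assumes H: "padic_compatible p H" and x: "\<forall>i. x i < p"
    and root: "\<And>m. m0 \<le> m \<Longrightarrow> int p ^ m dvd poly (H m) (zp_trunc p x m)"
  shows "padic_root p H x"
  unfolding padic_root_def
proof (intro conjI allI x[rule_format])
  fix m
  show "int p ^ m dvd poly (H m) (zp_trunc p x m)"
    using padic_compatible_dvd_mono[OF H _ root power_dvd_zp_trunc_diff, of m "max m0 m"] by simp
qed

locale split_reduction =
  fixes p :: nat and H :: "nat \<Rightarrow> int poly" and \<gamma> :: int and B :: "int set"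
  assumes prime: "prime p"
    and compatible: "padic_compatible p H"
    and reduction: "\<And>m. m \<ge> 1 \<Longrightarrow> [:int p:] dvd H m - smult \<gamma> (\<Prod>b\<in>B. [:-b, 1:])"
    and residues: "B \<subseteq> {0..<int p}"
    and unit: "\<not> int p dvd \<gamma>"
begin

abbreviation F :: "int poly" where
  "F \<equiv> smult \<gamma> (\<Prod>b\<in>B. [:-b, 1:])"

lemma finite_B: "finite B"
  using residues finite_subset by blast

lemma prime_int: "prime (int p)"
  using prime by simp

lemma poly_pderiv_F: "b \<in> B \<Longrightarrow> poly (pderiv F) b = \<gamma> * (\<Prod>c\<in>B - {b}. b - c)"
proof -
  assume b: "b \<in> B"
  define Q where "Q = (\<Prod>c\<in>B - {b}. [:-c, 1::int:])"
  have "F = smult \<gamma> ([:-b, 1:] * Q)"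
    using b finite_B by (simp add: Q_def prod.remove)
  moreover have "pderiv [:-b, 1:] = 1" by (simp add: pderiv_pCons)
  ultimately have "pderiv F = smult \<gamma> ([:-b, 1:] * pderiv Q + Q)"
    by (simp only: pderiv_smult pderiv_mult mult_1_right)
  then show ?thesis by (simp add: Q_def poly_prod)
qed

lemma dvd_poly_F_iff: "int p dvd poly F t \<longleftrightarrow> (\<exists>b\<in>B. int p dvd t - b)"
  using unit prime_int finite_B by (simp add: poly_prod prime_dvd_mult_iff prime_dvd_prod_iff)

lemma not_dvd_pderiv_F: "b \<in> B \<Longrightarrow> \<not> int p dvd poly (pderiv F) b"
proof
  assume b: "b \<in> B" and "int p dvd poly (pderiv F) b"
  with unit prime_int obtain c where c: "c \<in> B - {b}" "int p dvd b - c"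
    by (auto simp: poly_pderiv_F prime_dvd_mult_iff prime_dvd_prod_iff finite_B)
  then have "b = c" using b residues by (intro eq_if_dvd_diff_less[of _ "int p"]) auto
  then show False using c by simp
qed

lemma not_dvd_pderiv_near_root:
  assumes "m \<ge> 1" "b \<in> B" "int p dvd t - b"
  shows "\<not> int p dvd poly (pderiv (H m)) t"
proof
  assume "int p dvd poly (pderiv (H m)) t"
  moreover have "int p dvd poly (pderiv (H m)) t - poly (pderiv F) b"
    using const_poly_dvd_pderiv[OF reduction[OF assms(1)]] assms(3)
    by (intro const_poly_dvd_diff_imp_dvd_poly_diff) (simp_all add: pderiv_diff)
  ultimately have "int p dvd poly (pderiv F) b" by (rule dvd_diff_cancel_left)
  then show False using not_dvd_pderiv_F[OF assms(2)] by simp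
qed

lemma padic_root_first_digit:
  assumes x: "padic_root p H x"
  shows "int (x 0) \<in> B"
proof -
  have "int p dvd poly (H 1) (int (x 0))"
    using x unfolding padic_root_def by (metis power_one_right zp_trunc_Suc_0 One_nat_def)
  moreover have "int p dvd poly (H 1) (int (x 0)) - poly F (int (x 0))"
    using reduction[of 1] by (intro const_poly_dvd_diff_imp_dvd_poly_diff) auto
  ultimately have "int p dvd poly F (int (x 0))" by (rule dvd_diff_cancel_left)
  then obtain b where b: "b \<in> B" "int p dvd int (x 0) - b" using dvd_poly_F_iff by blast
  moreover have "int (x 0) < int p" using x by (simp add: padic_root_def)
  ultimately have "int (x 0) = b" using residues by (intro eq_if_dvd_diff_less[of _ "int p"]) auto
  with b show ?thesis by simp
qed

lemma padic_root_unique: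
  assumes x: "padic_root p H x" and y: "padic_root p H y" and first: "x 0 = y 0"
  shows "x = y"
proof -
  have x_digits: "\<forall>i. x i < p" and y_digits: "\<forall>i. y i < p"
    using x y by (auto simp: padic_root_def)
  have trunc: "zp_trunc p x m = zp_trunc p y m" if "m \<ge> 1" for m
    using that
  proof (induct m rule: dec_induct)
    case (step m)
    let ?u = "zp_trunc p x m"
    have "int p dvd ?u - int (x 0)"
      using power_dvd_zp_trunc_diff[of 1 m p x] step(1) by simp
    then have "\<not> int p dvd poly (pderiv (H (Suc m))) ?u"
      using padic_root_first_digit[OF x] by (intro not_dvd_pderiv_near_root) auto
    moreover have "int p ^ Suc m dvd poly (H (Suc m)) (?u + int p ^ m * int (x m))"
      "int p ^ Suc m dvd poly (H (Suc m)) (?u + int p ^ m * int (y m))"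
      using x y step(3) unfolding padic_root_def by (metis zp_trunc_Suc mult.commute)+
    ultimately have "int (x m) = int (y m)"
      using prime_int step(1) x_digits y_digits by (intro hensel_digit_unique) auto
    then show ?case using step(3) by (simp add: zp_trunc_Suc)
  qed (use first in simp)
  show ?thesis
  proof
    fix i
    show "x i = y i"
      using zp_trunc_eq_imp_digits_eq[OF x_digits y_digits trunc[of "Suc i"]] by simp
  qed
qed

lemma padic_root_exists:
  assumes b: "b \<in> B"
  shows "\<exists>x. padic_root p H x \<and> int (x 0) = b"
proof -
  let ?G = "\<lambda>m t. int p ^ m dvd poly (H m) t \<and> int p dvd t - b"
  have "int p dvd poly (H 1) b - poly F b"
    using reduction[of 1] by (intro const_poly_dvd_diff_imp_dvd_poly_diff) auto
  moreover have "poly F b = 0" using b finite_B by (simp add: poly_prod)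
  ultimately have "int p dvd poly (H 1) b" by (simp only: diff_zero)
  then have start: "?G 1 b" by simp
  have lift: "\<exists>d. 0 \<le> d \<and> d < int p \<and> ?G (Suc m) (t + int p ^ m * d)"
    if m: "1 \<le> m" and G: "?G m t" for m t
  proof -
    have "int p ^ m dvd poly (H (Suc m)) t - poly (H m) t"
      using compatible by (intro const_poly_dvd_diff_imp_dvd_poly_diff) (auto simp: padic_compatible_def)
    then have "int p ^ m dvd poly (H (Suc m)) t" using G by (metis dvd_add diff_add_cancel)
    moreover have "\<not> int p dvd poly (pderiv (H (Suc m))) t"
      using G m by (intro not_dvd_pderiv_near_root[OF _ b]) auto
    ultimately obtain d where d: "0 \<le> d" "d < int p" "int p ^ Suc m dvd poly (H (Suc m)) (t + int p ^ m * d)"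
      using hensel_digit_exists[OF prime_int m] by blast
    moreover have "int p dvd (t - b) + int p ^ m * d"
      using G m by (intro dvd_add dvd_mult2) (auto simp: dvd_power)
    then have "int p dvd t + int p ^ m * d - b" by (simp add: algebra_simps)
    ultimately show ?thesis by blast
  qed
  have "\<exists>x. (\<forall>i. x i < p) \<and> zp_trunc p x 1 = b \<and> (\<forall>m\<ge>1. ?G m (zp_trunc p x m))"
    by (rule exists_digits_along_lifts) (use start lift b residues prime_gt_0_nat[OF prime] in auto)
  then obtain x where x: "\<forall>i. x i < p" "zp_trunc p x 1 = b" "\<forall>m\<ge>1. ?G m (zp_trunc p x m)"
    by blast
  have "padic_root p H x"
    using x by (intro padic_rootI[OF compatible, of x 1]) auto
  with x show ?thesis by auto
qed

theorem card_padic_roots: "card {x. padic_root p H x} = card B"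
proof -
  have "bij_betw (\<lambda>x. int (x 0)) {x. padic_root p H x} B"
    using padic_root_unique padic_root_first_digit padic_root_exists
    by (intro bij_betwI') fastforce+
  then show ?thesis by (rule bij_betw_same_card)
qed

end

section \<open>The rescaled polynomial \<open>p\<^sup>-\<^sup>k f(pX)\<close>\<close>

definition trunc_poly :: "nat \<Rightarrow> nat \<Rightarrow> (nat \<Rightarrow> nat \<Rightarrow> nat) \<Rightarrow> nat \<Rightarrow> int poly" where
  "trunc_poly p n a K = (\<Sum>i<n. monom (zp_trunc p (a i) K) i) + monom 1 n"

lemma coeff_trunc_poly:
  "coeff (trunc_poly p n a K) j = (if j < n then zp_trunc p (a j) K else if j = n then 1 else 0)"
  by (auto simp: trunc_poly_def coeff_sum coeff_monom)

lemma poly_trunc_poly: "poly (trunc_poly p n a K) t = (\<Sum>i<n. zp_trunc p (a i) K * t ^ i) + t ^ n"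
  by (simp add: trunc_poly_def poly_sum poly_monom)

lemma is_zp_root_iff_padic_root: "is_zp_root p n a x \<longleftrightarrow> padic_root p (trunc_poly p n a) x"
  by (simp add: is_zp_root_def padic_root_def poly_trunc_poly)

lemma padic_compatible_trunc_poly: "padic_compatible p (trunc_poly p n a)"
  by (auto simp: padic_compatible_def const_poly_dvd_iff coeff_trunc_poly power_dvd_zp_trunc_diff)

definition valid_coeffs :: "nat \<Rightarrow> nat \<Rightarrow> (nat \<Rightarrow> nat \<Rightarrow> nat) \<Rightarrow> bool" where
  "valid_coeffs p n a \<longleftrightarrow> (\<forall>j<n. a j 0 = 0 \<and> (\<forall>i. a j i < p))"

lemma dvd_zp_trunc_if_valid:
  assumes "valid_coeffs p n a" "j < n"
  shows "int p dvd zp_trunc p (a j) K"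
proof (cases K)
  case (Suc K')
  have "int p ^ 1 dvd zp_trunc p (a j) K - zp_trunc p (a j) 1"
    using Suc by (intro power_dvd_zp_trunc_diff) simp
  then show ?thesis using assms by (simp add: valid_coeffs_def)
qed simp

lemma trunc_poly_mod_p:
  "valid_coeffs p n a \<Longrightarrow> [:int p:] dvd trunc_poly p n a K - monom 1 n"
  by (auto simp: const_poly_dvd_iff coeff_trunc_poly coeff_monom dvd_zp_trunc_if_valid)

lemma zp_root_first_digit:
  assumes p: "prime p" and n: "n \<ge> 1" and a: "valid_coeffs p n a" and x: "is_zp_root p n a x"
  shows "x 0 = 0"
proof -
  have "int p dvd poly (trunc_poly p n a 1) (int (x 0))"
    using x unfolding is_zp_root_iff_padic_root padic_root_def
    by (metis power_one_right zp_trunc_Suc_0 One_nat_def)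
  then have "p dvd x 0 ^ n"
    using a by (simp add: poly_trunc_poly valid_coeffs_def flip: of_nat_power)
  then have "p dvd x 0" by (rule prime_dvd_power[OF p])
  moreover have "x 0 < p" using x by (simp add: is_zp_root_def)
  ultimately show ?thesis by (metis gr0I nat_dvd_not_less)
qed

lemma card_first_digit_fixed: "card {x. x 0 = c \<and> P (x \<circ> Suc)} = card {y. P y}"
proof -
  have "{x. x 0 = c \<and> P (x \<circ> Suc)} = case_nat c ` {y. P y}"
    by (auto simp: image_iff o_def fun_eq_iff intro!: exI[where x="\<lambda>i. _ (Suc i)"] split: nat.split)
  moreover have "inj (case_nat c)"
    by (intro injI) (metis nat.case(2) ext)
  ultimately show ?thesis by (simp add: card_image inj_on_subset)
qed

text \<open>Together with \<open>valid_coeffs\<close>: \<open>v\<^sub>p(a\<^sub>j) \<ge> k - j\<close> for \<open>j < k\<close>.\<close>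

definition low_digits_vanish :: "nat \<Rightarrow> (nat \<Rightarrow> nat \<Rightarrow> nat) \<Rightarrow> bool" where
  "low_digits_vanish k a \<longleftrightarrow> (\<forall>j<k. \<forall>i. 1 \<le> i \<and> i < k - j \<longrightarrow> a j i = 0)"

text \<open>The polynomial \<open>p\<^sup>-\<^sup>k f(pX)\<close> at precision \<open>m\<close>; the division is exact when the
  low digits vanish.\<close>

definition rescaled_poly :: "nat \<Rightarrow> nat \<Rightarrow> nat \<Rightarrow> (nat \<Rightarrow> nat \<Rightarrow> nat) \<Rightarrow> nat \<Rightarrow> int poly" where
  "rescaled_poly p n k a m =
     map_poly (\<lambda>c. c div int p ^ k) (pcompose (trunc_poly p n a (m + k)) [:0, int p:])"

text \<open>Its reduction modulo \<open>p\<close>, read off from the digits \<open>a\<^sub>j\<^sub>,\<^sub>k\<^sub>-\<^sub>j\<close>.\<close>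

definition pattern_poly :: "nat \<Rightarrow> nat \<Rightarrow> (nat \<Rightarrow> nat \<Rightarrow> nat) \<Rightarrow> int poly" where
  "pattern_poly n k a = (\<Sum>i<k. monom (int (a i (k - i))) i) + (if k = n then monom 1 n else 0)"

lemma coeff_pattern_poly:
  "k \<le> n \<Longrightarrow> coeff (pattern_poly n k a) i = (if i < k then int (a i (k - i)) else of_bool (k = n \<and> i = n))"
  by (auto simp: pattern_poly_def coeff_sum coeff_monom)

context
  fixes p n k :: nat and a :: "nat \<Rightarrow> nat \<Rightarrow> nat"
  assumes prime: "prime p" and k: "1 \<le> k" "k \<le> n"
    and valid: "valid_coeffs p n a" and low: "low_digits_vanish k a"
begin

lemma zp_trunc_low_eq_0:
  assumes i: "i < k"
  shows "zp_trunc p (a i) (k - i) = 0"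
proof -
  have "a i j = 0" if "j < k - i" for j
    using valid low i k that unfolding valid_coeffs_def low_digits_vanish_def by (cases j) auto
  then show ?thesis by (simp add: zp_trunc_def)
qed

lemma power_dvd_coeff_scaled:
  assumes "K \<ge> k"
  shows "int p ^ k dvd coeff (pcompose (trunc_poly p n a K) [:0, int p:]) i"
proof -
  have "int p ^ k dvd zp_trunc p (a i) K * int p ^ i" if "i < n" for i
  proof (cases "i < k")
    case True
    have "int p ^ (k - i) dvd zp_trunc p (a i) K - zp_trunc p (a i) (k - i)"
      using assms by (intro power_dvd_zp_trunc_diff) simp
    then have "int p ^ (k - i) * int p ^ i dvd zp_trunc p (a i) K * int p ^ i"
      using zp_trunc_low_eq_0[OF True] by (intro mult_dvd_mono) simp_all
    then show ?thesis using True by (simp flip: power_add)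
  qed (simp add: le_imp_power_dvd dvd_mult)
  then show ?thesis
    using k by (auto simp: coeff_pcompose_linear coeff_trunc_poly le_imp_power_dvd mult.commute)
qed

lemma smult_rescaled_poly:
  "smult (int p ^ k) (rescaled_poly p n k a m) = pcompose (trunc_poly p n a (m + k)) [:0, int p:]"
  by (rule poly_eqI) (simp add: rescaled_poly_def coeff_map_poly power_dvd_coeff_scaled)

lemma coeff_rescaled_poly:
  "int p ^ k * coeff (rescaled_poly p n k a m) i =
     (if i < n then zp_trunc p (a i) (m + k) * int p ^ i else if i = n then int p ^ n else 0)"
  by (metis smult_rescaled_poly coeff_smult coeff_pcompose_linear coeff_trunc_poly
      mult.commute mult_zero_right mult_1_right)

lemma padic_compatible_rescaled_poly: "padic_compatible p (rescaled_poly p n k a)"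
  unfolding padic_compatible_def const_poly_dvd_iff
proof (intro allI impI)
  fix m m' i :: nat
  assume "m \<le> m'"
  then have "int p ^ (m + k) dvd
      coeff (trunc_poly p n a (m' + k)) i * int p ^ i - coeff (trunc_poly p n a (m + k)) i * int p ^ i"
    using padic_compatible_trunc_poly[of p n a]
    by (simp add: padic_compatible_def const_poly_dvd_iff left_diff_distrib[symmetric])
  then have "int p ^ k * int p ^ m dvd
      int p ^ k * (coeff (rescaled_poly p n k a m') i - coeff (rescaled_poly p n k a m) i)"
    by (simp add: right_diff_distrib coeff_rescaled_poly power_add mult.commute coeff_trunc_poly split: if_splits)
  then show "int p ^ m dvd coeff (rescaled_poly p n k a m' - rescaled_poly p n k a m) i"
    using prime_gt_0_nat[OF prime] by simp
qed

lemma coeff_rescaled_poly_low: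
  assumes i: "i < k" and m: "m \<ge> 1"
  shows "int p dvd coeff (rescaled_poly p n k a m) i - int (a i (k - i))"
proof -
  let ?A = "zp_trunc p (a i) (m + k)"
  have "int p ^ Suc (k - i) dvd ?A - zp_trunc p (a i) (Suc (k - i))"
    using m i by (intro power_dvd_zp_trunc_diff) simp
  moreover have "zp_trunc p (a i) (Suc (k - i)) = int (a i (k - i)) * int p ^ (k - i)"
    using zp_trunc_low_eq_0[OF i] by (simp add: zp_trunc_Suc)
  ultimately have "int p ^ Suc (k - i) dvd ?A - int (a i (k - i)) * int p ^ (k - i)" by simp
  then obtain t where "?A - int (a i (k - i)) * int p ^ (k - i) = int p ^ Suc (k - i) * t"
    by (rule dvdE)
  then have t: "?A = int (a i (k - i)) * int p ^ (k - i) + int p ^ Suc (k - i) * t" by simp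
  have "int p ^ k * coeff (rescaled_poly p n k a m) i = ?A * int p ^ i"
    using coeff_rescaled_poly[of m i] i k by simp
  also have "\<dots> = int p ^ k * (int (a i (k - i)) + int p * t)"
  proof -
    have e: "k = (k - i) + i" using i by simp
    show ?thesis unfolding t by (subst (3 4) e) (simp add: power_add algebra_simps)
  qed
  finally show ?thesis using prime_gt_0_nat[OF prime] by simp
qed

lemma coeff_rescaled_poly_mod_p:
  assumes m: "m \<ge> 1"
  shows "int p dvd coeff (rescaled_poly p n k a m - pattern_poly n k a) i"
proof (cases "i < k")
  case True
  then show ?thesis
    using coeff_rescaled_poly_low[OF True m] k by (simp add: coeff_pattern_poly)
next
  case False
  have pattern: "coeff (pattern_poly n k a) i = of_bool (k = n \<and> i = n)"
    using False k by (simp add: coeff_pattern_poly)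
  have scaled: "int p ^ k * coeff (rescaled_poly p n k a m) i =
     int p ^ k * (if i < n then zp_trunc p (a i) (m + k) * int p ^ (i - k) else if i = n then int p ^ (n - k) else 0)"
    using coeff_rescaled_poly[of m i] False k by (auto simp flip: power_add)
  have "int p dvd (if i < n then zp_trunc p (a i) (m + k) * int p ^ (i - k) else if i = n then int p ^ (n - k) else 0)
      - of_bool (k = n \<and> i = n)"
  proof (cases "i < n")
    case True
    then show ?thesis
      using False dvd_zp_trunc_if_valid[OF valid True] by (cases "i = k") auto
  qed (use False in auto)
  then show ?thesis using scaled pattern prime_gt_0_nat[OF prime] by simp
qed

lemma rescaled_poly_mod_p: "m \<ge> 1 \<Longrightarrow> [:int p:] dvd rescaled_poly p n k a m - pattern_poly n k a"
  using coeff_rescaled_poly_mod_p by (simp add: const_poly_dvd_iff)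

lemma poly_rescaled_poly_shift:
  assumes "x 0 = 0" "m + k = Suc K"
  shows "int p ^ k * poly (rescaled_poly p n k a m) (zp_trunc p (x \<circ> Suc) K)
       = poly (trunc_poly p n a (m + k)) (zp_trunc p x (m + k))"
proof -
  have "int p ^ k * poly (rescaled_poly p n k a m) t = poly (trunc_poly p n a (m + k)) (int p * t)" for t
    using arg_cong[OF smult_rescaled_poly[of m], of "\<lambda>P. poly P t"]
    by (simp add: poly_pcompose mult.commute)
  then show ?thesis using assms by (simp add: zp_trunc_shift)
qed

lemma dvd_rescaled_iff_dvd_trunc:
  assumes "x 0 = 0"
  shows "int p ^ m dvd poly (rescaled_poly p n k a m) (zp_trunc p (x \<circ> Suc) m)
     \<longleftrightarrow> int p ^ (m + k) dvd poly (trunc_poly p n a (m + k)) (zp_trunc p x (m + k))"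
proof -
  define K where "K = m + k - 1"
  have K: "m + k = Suc K" using k by (simp add: K_def)
  have "int p ^ m dvd zp_trunc p (x \<circ> Suc) K - zp_trunc p (x \<circ> Suc) m"
    using K k by (intro power_dvd_zp_trunc_diff) simp
  then have diff: "int p ^ m dvd poly (rescaled_poly p n k a m) (zp_trunc p (x \<circ> Suc) K)
      - poly (rescaled_poly p n k a m) (zp_trunc p (x \<circ> Suc) m)"
    using dvd_poly_diff dvd_trans by blast
  have "int p ^ m dvd poly (rescaled_poly p n k a m) (zp_trunc p (x \<circ> Suc) m)
      \<longleftrightarrow> int p ^ m dvd poly (rescaled_poly p n k a m) (zp_trunc p (x \<circ> Suc) K)"
    using dvd_add_right_iff[OF diff, where c = "poly (rescaled_poly p n k a m) (zp_trunc p (x \<circ> Suc) m)"]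
    by simp
  also have "\<dots> \<longleftrightarrow> int p ^ k * int p ^ m dvd int p ^ k * poly (rescaled_poly p n k a m) (zp_trunc p (x \<circ> Suc) K)"
    using prime_gt_0_nat[OF prime] by simp
  finally show ?thesis
    using poly_rescaled_poly_shift[of x m K, OF assms K] by (simp add: power_add mult.commute)
qed

lemma is_zp_root_iff_rescaled:
  "is_zp_root p n a x \<longleftrightarrow> x 0 = 0 \<and> padic_root p (rescaled_poly p n k a) (x \<circ> Suc)"
proof
  assume x: "is_zp_root p n a x"
  have x0: "x 0 = 0" using zp_root_first_digit[OF prime _ valid x] k by simp
  with x show "x 0 = 0 \<and> padic_root p (rescaled_poly p n k a) (x \<circ> Suc)"
    by (auto simp: padic_root_def is_zp_root_iff_padic_root dvd_rescaled_iff_dvd_trunc)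
next
  assume y: "x 0 = 0 \<and> padic_root p (rescaled_poly p n k a) (x \<circ> Suc)"
  then have digits: "\<forall>i. x i < p" using prime_gt_0_nat[OF prime] by (auto simp: padic_root_def) (metis not0_implies_Suc)
  show "is_zp_root p n a x"
    unfolding is_zp_root_iff_padic_root
  proof (rule padic_rootI[OF padic_compatible_trunc_poly digits])
    fix M assume "k \<le> M"
    then show "int p ^ M dvd poly (trunc_poly p n a M) (zp_trunc p x M)"
      using y dvd_rescaled_iff_dvd_trunc[of x "M - k"] by (simp add: padic_root_def)
  qed
qed

lemma num_roots_eq_card_rescaled: "num_roots p n a = card {y. padic_root p (rescaled_poly p n k a) y}"
  unfolding num_roots_def is_zp_root_iff_rescaled by (rule card_first_digit_fixed)

theorem num_roots_eq_if_pattern_splits: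
  assumes "B \<subseteq> {0..<int p}" "\<not> int p dvd \<gamma>"
    and "[:int p:] dvd pattern_poly n k a - smult \<gamma> (\<Prod>b\<in>B. [:-b, 1:])"
  shows "num_roots p n a = card B"
proof -
  interpret split_reduction p "rescaled_poly p n k a" \<gamma> B
  proof
    fix m :: nat assume "m \<ge> 1"
    from dvd_add[OF rescaled_poly_mod_p[OF this] assms(3)]
    show "[:int p:] dvd rescaled_poly p n k a m - smult \<gamma> (\<Prod>b\<in>B. [:-b, 1:])" by simp
  qed (use prime padic_compatible_rescaled_poly assms in auto)
  show ?thesis using card_padic_roots num_roots_eq_card_rescaled by simp
qed

end

section \<open>The digit pattern of a polynomial with \<open>r\<close> roots\<close>

lemma prime_power_dvd_mult_cancel:
  fixes q :: int
  assumes "prime q"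
  shows "\<not> q ^ D dvd u \<Longrightarrow> q ^ N dvd u * w \<Longrightarrow> q ^ (N - D) dvd w"
proof (induct D arbitrary: u N)
  case (Suc D)
  show ?case
  proof (cases "q dvd u")
    case True
    then obtain u' where u: "u = q * u'" by (auto simp: dvd_def)
    have "\<not> q ^ D dvd u'" using Suc.prems(1) u by (auto simp: mult_dvd_mono)
    moreover have "q ^ (N - 1) dvd u' * w"
      using Suc.prems(2) u assms by (cases N) (simp_all add: mult.assoc)
    ultimately show ?thesis using Suc.hyps by fastforce
  next
    case False
    then have "coprime (q ^ N) u" using assms by (simp add: prime_imp_coprime coprime_commute)
    then have "q ^ N dvd w" using Suc.prems(2) by (simp add: coprime_dvd_mult_right_iff)
    then show ?thesis by (meson diff_le_self dvd_trans le_imp_power_dvd)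
  qed
qed simp

lemma exists_cofactor_mod_prime_power:
  fixes f :: "int poly" and q :: int
  assumes q: "prime q"
  shows "distinct as \<Longrightarrow> \<forall>\<alpha>\<in>set as. q ^ N dvd poly f \<alpha> \<Longrightarrow>
    pairwise (\<lambda>\<alpha> \<beta>. \<not> q ^ D dvd \<beta> - \<alpha>) (set as) \<Longrightarrow>
    \<exists>g. [:q ^ (N - length as * D):] dvd f - (\<Prod>b\<leftarrow>as. [:-b, 1:]) * g"
proof (induct as arbitrary: f N)
  case Nil
  show ?case by (rule exI[of _ f]) simp
next
  case (Cons \<alpha> rest)
  define h where "h = synthetic_div f \<alpha>"
  have f: "f = [:-\<alpha>, 1:] * h + [:poly f \<alpha>:]"
    unfolding h_def by (rule synthetic_div_correct'[symmetric])
  have "q ^ (N - D) dvd poly h \<beta>" if \<beta>: "\<beta> \<in> set rest" for \<beta>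
  proof -
    have "poly f \<beta> = (\<beta> - \<alpha>) * poly h \<beta> + poly f \<alpha>"
      by (subst f) (simp add: algebra_simps)
    then have "(\<beta> - \<alpha>) * poly h \<beta> = poly f \<beta> - poly f \<alpha>" by simp
    moreover have "q ^ N dvd poly f \<beta>" "q ^ N dvd poly f \<alpha>" using Cons.prems(2) \<beta> by auto
    then have "q ^ N dvd poly f \<beta> - poly f \<alpha>" by (rule dvd_diff)
    moreover have "\<not> q ^ D dvd \<beta> - \<alpha>"
      using Cons.prems(1,3) \<beta> by (auto simp: pairwise_def)
    ultimately show ?thesis using prime_power_dvd_mult_cancel[OF q] by metis
  qed
  moreover have "distinct rest" "pairwise (\<lambda>\<alpha> \<beta>. \<not> q ^ D dvd \<beta> - \<alpha>) (set rest)"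
    using Cons.prems by (auto simp: pairwise_insert)
  ultimately obtain g where g: "[:q ^ (N - D - length rest * D):] dvd h - (\<Prod>b\<leftarrow>rest. [:-b, 1:]) * g"
    using Cons.hyps by blast
  have "f - (\<Prod>b\<leftarrow>\<alpha> # rest. [:-b, 1:]) * g
      = [:-\<alpha>, 1:] * (h - (\<Prod>b\<leftarrow>rest. [:-b, 1:]) * g) + [:poly f \<alpha>:]"
    by (subst f) (simp add: algebra_simps)
  moreover have "N - D - length rest * D = N - length (\<alpha> # rest) * D" by simp
  then have "[:q ^ (N - length (\<alpha> # rest) * D):] dvd [:-\<alpha>, 1:] * (h - (\<Prod>b\<leftarrow>rest. [:-b, 1:]) * g)"
    using g by (metis dvd_mult)
  moreover have "q ^ (N - length (\<alpha> # rest) * D) dvd poly f \<alpha>"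
    using Cons.prems(2) by (meson diff_le_self dvd_trans le_imp_power_dvd list.set_intros(1))
  ultimately show ?case by (metis const_poly_dvd_const dvd_add)
qed

lemma prod_linear_mod_monom:
  fixes q :: int
  shows "\<forall>b\<in>set as. q dvd b \<Longrightarrow> [:q:] dvd (\<Prod>b\<leftarrow>as. [:-b, 1:]) - monom 1 (length as)"
proof (induct as)
  case Nil
  then show ?case by (simp add: monom_0 one_pCons)
next
  case (Cons \<alpha> rest)
  have "(\<Prod>b\<leftarrow>\<alpha> # rest. [:-b, 1:]) - monom 1 (length (\<alpha> # rest))
      = [:-\<alpha>, 1:] * ((\<Prod>b\<leftarrow>rest. [:-b, 1:]) - monom 1 (length rest)) + [:-\<alpha>:] * monom 1 (length rest)"
    by (simp add: monom_Suc algebra_simps)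
  moreover have "[:q:] dvd [:-\<alpha>:]" using Cons.prems by (simp add: const_poly_dvd_const)
  ultimately show ?case using Cons by (metis dvd_add dvd_mult dvd_mult2 list.set_intros(2))
qed

lemma pcompose_prod_linear_scale:
  fixes q :: int
  shows "pcompose (\<Prod>b\<leftarrow>as. [:-(q * b), 1:]) [:0, q:] = smult (q ^ length as) (\<Prod>b\<leftarrow>as. [:-b, 1:])"
proof (induct as)
  case Nil
  then show ?case by (simp add: one_pCons)
next
  case (Cons b rest)
  have b: "pcompose [:-(q * b), 1:] [:0, q:] = smult q [:-b, 1:]" by (simp add: pcompose_pCons)
  have "pcompose (\<Prod>b\<leftarrow>b # rest. [:-(q * b), 1:]) [:0, q:]
      = pcompose [:-(q * b), 1:] [:0, q:] * pcompose (\<Prod>b\<leftarrow>rest. [:-(q * b), 1:]) [:0, q:]"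
    by (simp only: prod_list.Cons list.map pcompose_mult)
  also have "\<dots> = smult (q ^ length (b # rest)) ([:-b, 1:] * (\<Prod>b\<leftarrow>rest. [:-b, 1:]))"
    by (simp only: b Cons.hyps mult_smult_left mult_smult_right smult_smult list.size power_Suc)
      (simp add: mult_ac)
  finally show ?case by (simp only: prod_list.Cons list.map)
qed

lemma prod_linear_cong:
  fixes q :: int
  shows "length as = length bs \<Longrightarrow> (\<forall>i<length as. q dvd as ! i - bs ! i) \<Longrightarrow>
    [:q:] dvd (\<Prod>b\<leftarrow>as. [:-b, 1:]) - (\<Prod>b\<leftarrow>bs. [:-b, 1:])"
proof (induct as arbitrary: bs)
  case (Cons a as)
  then obtain b bs' where bs: "bs = b # bs'" by (cases bs) auto
  have IH: "[:q:] dvd (\<Prod>b\<leftarrow>as. [:-b, 1:]) - (\<Prod>b\<leftarrow>bs'. [:-b, 1:])"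
    using Cons bs by force
  have "q dvd b - a" using Cons.prems bs by (force simp: dvd_diff_commute)
  then have "[:q:] dvd [:b - a:]" by (simp add: const_poly_dvd_const)
  moreover have "(\<Prod>b\<leftarrow>a # as. [:-b, 1:]) - (\<Prod>b\<leftarrow>b # bs'. [:-b, 1:])
     = [:-a, 1:] * ((\<Prod>b\<leftarrow>as. [:-b, 1:]) - (\<Prod>b\<leftarrow>bs'. [:-b, 1:])) + [:b - a:] * (\<Prod>b\<leftarrow>bs'. [:-b, 1:])"
  proof -
    have "X * A' - Y * B' = X * (A' - B') + (X - Y) * B'" for X Y A' B' :: "int poly"
      by (simp add: algebra_simps)
    moreover have "[:-a, 1:] - [:-b, 1:] = [:b - a:]" by simp
    ultimately show ?thesis by (simp only: prod_list.Cons list.map)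
  qed
  ultimately show ?case using IH bs by (metis dvd_add dvd_mult dvd_mult2)
qed simp

lemma smult_prod_linear_mod:
  fixes q \<gamma> :: int
  shows "[:q:] dvd smult \<gamma> (\<Prod>b\<leftarrow>bs. [:-b, 1:]) - smult (\<gamma> mod q) (\<Prod>b\<leftarrow>map (\<lambda>b. b mod q) bs. [:-b, 1:])"
proof -
  let ?C = "\<Prod>b\<leftarrow>bs. [:-b, 1:]" and ?B = "\<Prod>b\<leftarrow>map (\<lambda>b. b mod q) bs. [:-b, 1:]"
  have "[:q:] dvd ?C - ?B"
    by (rule prod_linear_cong) (auto simp: mod_eq_dvd_iff[symmetric])
  then have "[:q:] dvd smult \<gamma> (?C - ?B)" by (simp add: const_poly_dvd_iff)
  moreover have "q dvd \<gamma> - \<gamma> mod q" by (simp add: mod_eq_dvd_iff[symmetric])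
  then have "[:q:] dvd smult (\<gamma> - \<gamma> mod q) ?B" by (simp add: const_poly_dvd_iff)
  moreover have "smult \<gamma> ?C - smult (\<gamma> mod q) ?B = smult \<gamma> (?C - ?B) + smult (\<gamma> - \<gamma> mod q) ?B"
    by (simp add: algebra_simps smult_diff_right smult_diff_left)
  ultimately show ?thesis by (metis dvd_add)
qed

lemma exists_separating_precision:
  fixes S :: "(nat \<Rightarrow> nat) set"
  assumes "finite S"
  shows "\<exists>D. \<forall>x\<in>S. \<forall>y\<in>S. x \<noteq> y \<longrightarrow> (\<exists>i<D. x i \<noteq> y i)"
proof -
  define w where "w = (\<lambda>(x::nat\<Rightarrow>nat, y). SOME i. x i \<noteq> y i)"
  have "\<exists>i<Suc (Max (w ` (S \<times> S))). x i \<noteq> y i" if "x \<in> S" "y \<in> S" "x \<noteq> y" for x y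
  proof -
    have "x (w (x, y)) \<noteq> y (w (x, y))"
      unfolding w_def using someI_ex[of "\<lambda>i. x i \<noteq> y i"] that by (auto simp: fun_eq_iff)
    moreover have "w (x, y) \<le> Max (w ` (S \<times> S))" using that assms by (intro Max_ge) auto
    ultimately show ?thesis by (intro exI[of _ "w (x, y)"]) auto
  qed
  then show ?thesis by blast
qed

lemma exists_separating_modulus:
  assumes "finite S" "\<forall>x\<in>S. \<forall>i. x i < p"
  shows "\<exists>D. \<forall>x\<in>S. \<forall>y\<in>S. \<forall>N\<ge>D. x \<noteq> y \<longrightarrow> \<not> int p ^ D dvd zp_trunc p y N - zp_trunc p x N"
proof -
  obtain D where D: "\<forall>x\<in>S. \<forall>y\<in>S. x \<noteq> y \<longrightarrow> (\<exists>i<D. x i \<noteq> y i)"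
    using exists_separating_precision[OF assms(1)] by blast
  have "\<not> int p ^ D dvd zp_trunc p y N - zp_trunc p x N"
    if "x \<in> S" "y \<in> S" "x \<noteq> y" "D \<le> N" for x y N
  proof
    assume "int p ^ D dvd zp_trunc p y N - zp_trunc p x N"
    then have "zp_trunc p y N mod int p ^ D = zp_trunc p x N mod int p ^ D"
      by (simp add: mod_eq_dvd_iff)
    then have "zp_trunc p x D = zp_trunc p y D" using assms(2) that by (simp add: zp_trunc_mod)
    then show False using assms(2) D that zp_trunc_eq_imp_digits_eq by metis
  qed
  then show ?thesis by blast
qed

lemma digits_of_power_cong:
  fixes q :: int and d :: "nat \<Rightarrow> nat"
  assumes p: "p > 1" and digits: "\<forall>i. d i < p"
    and cong: "int p ^ Suc e dvd zp_trunc p d M - int p ^ e * q" and M: "M \<ge> Suc e"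
  shows "(\<forall>i<e. d i = 0) \<and> int (d e) = q mod int p"
proof -
  define T where "T = zp_trunc p d (Suc e)"
  define u where "u = q mod int p"
  have u: "0 \<le> u" "u < int p" using p by (auto simp: u_def)
  have trunc: "int p ^ Suc e dvd zp_trunc p d M - T"
    unfolding T_def using M by (intro power_dvd_zp_trunc_diff)
  have "int p ^ e * q - int p ^ e * u = int p ^ Suc e * (q div int p)"
    by (simp add: u_def minus_mod_eq_mult_div right_diff_distrib[symmetric] mult.assoc)
  then have "int p ^ Suc e dvd int p ^ e * q - int p ^ e * u" by simp
  from dvd_add[OF dvd_diff[OF cong trunc] this] have "int p ^ Suc e dvd T - int p ^ e * u" by (simp add: algebra_simps)
  moreover have "0 \<le> T" "T < int p ^ Suc e"
    unfolding T_def by (rule zp_trunc_nonneg, rule zp_trunc_less) (use digits in simp)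
  moreover have "int p ^ e * u < int p ^ Suc e"
    using u p by (simp add: mult.commute)
  ultimately have T: "T = int p ^ e * u" using u by (intro eq_if_dvd_diff_less) auto
  have digit: "int (d i) = (T div int p ^ i) mod int p" if "i \<le> e" for i
    unfolding T_def using zp_trunc_digit[of "Suc e" d p i] digits that by simp
  have "d i = 0" if i: "i < e" for i
  proof -
    have "T = int p ^ i * (int p ^ (e - i) * u)"
      using i by (simp add: T mult.assoc flip: power_add)
    then have "T div int p ^ i = int p ^ (e - i) * u" using p by simp
    then show ?thesis using digit[of i] i by (simp add: dvd_power)
  qed
  moreover have "int (d e) = u" using digit[of e] p u by (simp add: T)
  ultimately show ?thesis by (simp add: u_def)
qed

context
  fixes p n r k :: nat and a :: "nat \<Rightarrow> nat \<Rightarrow> nat" and xs :: "(nat \<Rightarrow> nat) list"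
  assumes prime: "prime p" and n: "n \<ge> 1" and r: "r \<le> n" "r = n \<or> r + 2 \<le> n"
    and k: "k = min (r + 1) n" and valid: "valid_coeffs p n a"
    and xs: "distinct xs" "length xs = r" "\<forall>x\<in>set xs. is_zp_root p n a x"
begin

lemma exists_cofactor_of_roots:
  "\<exists>N g. k + 1 \<le> N \<and> [:int p ^ (k + 1):] dvd trunc_poly p n a N - (\<Prod>x\<leftarrow>xs. [:-zp_trunc p x N, 1:]) * g"
proof -
  obtain D where D: "\<forall>x\<in>set xs. \<forall>y\<in>set xs. \<forall>N\<ge>D. x \<noteq> y \<longrightarrow> \<not> int p ^ D dvd zp_trunc p y N - zp_trunc p x N"
    using exists_separating_modulus[of "set xs" p] xs(3) by (auto simp: is_zp_root_def)
  define N where "N = k + 1 + D + r * D"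
  define \<alpha>s where "\<alpha>s = map (\<lambda>x. zp_trunc p x N) xs"
  have DN: "D \<le> N" by (simp add: N_def)
  have "inj_on (\<lambda>x. zp_trunc p x N) (set xs)"
  proof (rule inj_onI, rule ccontr)
    fix x y assume "x \<in> set xs" "y \<in> set xs" "zp_trunc p x N = zp_trunc p y N" "x \<noteq> y"
    then show False using D DN by force
  qed
  then have "distinct \<alpha>s" using xs(1) by (simp add: \<alpha>s_def distinct_map)
  moreover have "\<forall>\<alpha>\<in>set \<alpha>s. int p ^ N dvd poly (trunc_poly p n a N) \<alpha>"
    using xs(3) by (auto simp: \<alpha>s_def is_zp_root_iff_padic_root padic_root_def)
  moreover have "pairwise (\<lambda>\<alpha> \<beta>. \<not> int p ^ D dvd \<beta> - \<alpha>) (set \<alpha>s)"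
  proof (rule pairwiseI)
    fix \<alpha> \<beta> assume "\<alpha> \<in> set \<alpha>s" "\<beta> \<in> set \<alpha>s" "\<alpha> \<noteq> \<beta>"
    then obtain x y where "x \<in> set xs" "y \<in> set xs" "x \<noteq> y" "\<alpha> = zp_trunc p x N" "\<beta> = zp_trunc p y N"
      by (auto simp: \<alpha>s_def)
    then show "\<not> int p ^ D dvd \<beta> - \<alpha>" using D DN by blast
  qed
  ultimately have "\<exists>g. [:int p ^ (N - length \<alpha>s * D):] dvd trunc_poly p n a N - (\<Prod>b\<leftarrow>\<alpha>s. [:-b, 1:]) * g"
    using prime by (intro exists_cofactor_mod_prime_power) simp_all
  moreover have "N - length \<alpha>s * D = (k + 1) + D" by (simp add: \<alpha>s_def xs(2) N_def)
  ultimately obtain g where "[:int p ^ ((k + 1) + D):] dvd trunc_poly p n a N - (\<Prod>b\<leftarrow>\<alpha>s. [:-b, 1:]) * g"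
    by auto
  moreover have "[:int p ^ (k + 1):] dvd [:int p ^ ((k + 1) + D):]"
    by (simp add: const_poly_dvd_const le_imp_power_dvd)
  ultimately have "[:int p ^ (k + 1):] dvd trunc_poly p n a N - (\<Prod>b\<leftarrow>\<alpha>s. [:-b, 1:]) * g"
    by (rule dvd_trans[rotated])
  then have "[:int p ^ (k + 1):] dvd trunc_poly p n a N - (\<Prod>x\<leftarrow>xs. [:-zp_trunc p x N, 1:]) * g"
    by (simp add: \<alpha>s_def o_def)
  then show ?thesis by (intro exI[of _ N] exI[of _ g]) (simp add: N_def)
qed

lemma roots_factor_mod_power:
  obtains N \<beta>s g where "k + 1 \<le> N" "length \<beta>s = r"
    "[:int p ^ (k + 1):] dvd trunc_poly p n a N - (\<Prod>b\<leftarrow>\<beta>s. [:-(int p * b), 1:]) * g"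
proof -
  obtain N g where N: "k + 1 \<le> N"
    and g: "[:int p ^ (k + 1):] dvd trunc_poly p n a N - (\<Prod>x\<leftarrow>xs. [:-zp_trunc p x N, 1:]) * g"
    using exists_cofactor_of_roots by blast
  define \<beta>s where "\<beta>s = map (\<lambda>x. zp_trunc p (x \<circ> Suc) (N - 1)) xs"
  have "zp_trunc p x N = int p * zp_trunc p (x \<circ> Suc) (N - 1)" if "x \<in> set xs" for x
    using zp_root_first_digit[OF prime n valid] xs(3) that zp_trunc_shift[of p x "N - 1"] N by simp
  then have "(\<Prod>x\<leftarrow>xs. [:-zp_trunc p x N, 1:]) = (\<Prod>b\<leftarrow>\<beta>s. [:-(int p * b), 1:])"
    by (simp add: \<beta>s_def o_def cong: map_cong)
  moreover have "length \<beta>s = r" by (simp add: \<beta>s_def xs(2))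
  ultimately show ?thesis using that N g by simp
qed

lemma cofactor_mod_p:
  assumes "[:int p:] dvd trunc_poly p n a N - (\<Prod>b\<leftarrow>\<beta>s. [:-(int p * b), 1:]) * g" "length \<beta>s = r"
  shows "int p dvd coeff g j - of_bool (j = n - r)"
proof -
  let ?R = "\<Prod>b\<leftarrow>\<beta>s. [:-(int p * b), 1:]"
  have "[:int p:] dvd ?R - monom 1 r"
    using prod_linear_mod_monom[of "map (\<lambda>b. int p * b) \<beta>s" "int p"] assms(2) by (simp add: o_def)
  moreover have "monom 1 r * g - monom 1 n
      = (trunc_poly p n a N - monom 1 n) - (trunc_poly p n a N - ?R * g) - (?R - monom 1 r) * g"
    by (simp add: algebra_simps)
  ultimately have "[:int p:] dvd monom 1 r * g - monom 1 n"
    using trunc_poly_mod_p[OF valid] assms(1) by (metis dvd_diff dvd_mult2)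
  then have "int p dvd coeff (monom 1 r * g - monom 1 n) (j + r)"
    by (simp add: const_poly_dvd_iff)
  moreover have "(n = j + r) = (j = n - r)" using r by auto
  ultimately show ?thesis by (auto simp: coeff_monom_mult coeff_monom)
qed

text \<open>This is where \<open>r \<noteq> n - 1\<close> is needed: for \<open>r < n\<close> the linear coefficient of the
  cofactor vanishes modulo \<open>p\<close>.\<close>

lemma rescaled_cofactor_mod_power:
  assumes g: "\<And>j. int p dvd coeff g j - of_bool (j = n - r)"
  obtains \<gamma> where "r = n \<longrightarrow> int p dvd \<gamma> - 1"
    "[:int p ^ (k - r + 1):] dvd pcompose g [:0, int p:] - [:int p ^ (k - r) * \<gamma>:]"
proof -
  define \<gamma> where "\<gamma> = (if r = n then coeff g 0 else coeff g 0 div int p)"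
  have g0: "coeff g 0 = int p ^ (k - r) * \<gamma>"
    using g[of 0] k r by (auto simp: \<gamma>_def)
  have high: "int p ^ (k - r + 1) dvd coeff g j * int p ^ j" if j: "j \<ge> 1" for j
  proof (cases "r = n \<or> j \<ge> 2")
    case True
    then have "k - r + 1 \<le> j" using k r j by auto
    then show ?thesis by (intro dvd_mult le_imp_power_dvd)
  next
    case False
    then have "j = 1" "k - r = 1" "n - r \<noteq> 1" using j k r by auto
    then have "j = 1" "k - r = 1" "int p dvd coeff g 1" using g[of 1] by auto
    then show ?thesis by (simp add: mult_dvd_mono)
  qed
  have "int p ^ (k - r + 1) dvd coeff (pcompose g [:0, int p:] - [:int p ^ (k - r) * \<gamma>:]) j" for j
  proof (cases j)
    case (Suc j')
    then have "coeff (pcompose g [:0, int p:] - [:int p ^ (k - r) * \<gamma>:]) j = coeff g j * int p ^ j"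
      by (simp add: coeff_pcompose_linear mult.commute)
    then show ?thesis using high[of j] Suc by simp
  qed (simp add: coeff_pcompose_linear g0 poly_0_coeff_0)
  then have "[:int p ^ (k - r + 1):] dvd pcompose g [:0, int p:] - [:int p ^ (k - r) * \<gamma>:]"
    by (simp add: const_poly_dvd_iff)
  moreover have "r = n \<longrightarrow> int p dvd \<gamma> - 1" using g[of 0] by (auto simp: \<gamma>_def)
  ultimately show ?thesis using that by blast
qed

lemma rescaled_trunc_poly_mod_power:
  obtains N \<gamma> \<beta>s where "k + 1 \<le> N" "r = n \<longrightarrow> int p dvd \<gamma> - 1" "length \<beta>s = r"
    "[:int p ^ (k + 1):] dvd
       pcompose (trunc_poly p n a N) [:0, int p:] - smult (int p ^ k * \<gamma>) (\<Prod>b\<leftarrow>\<beta>s. [:-b, 1:])"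
proof -
  obtain N \<beta>s g where N: "k + 1 \<le> N" and \<beta>s: "length \<beta>s = r"
    and fg: "[:int p ^ (k + 1):] dvd trunc_poly p n a N - (\<Prod>b\<leftarrow>\<beta>s. [:-(int p * b), 1:]) * g"
    by (rule roots_factor_mod_power)
  have "[:int p:] dvd trunc_poly p n a N - (\<Prod>b\<leftarrow>\<beta>s. [:-(int p * b), 1:]) * g"
    using fg by (rule dvd_trans[rotated]) (simp add: const_poly_dvd_const)
  then have "int p dvd coeff g j - of_bool (j = n - r)" for j
    using cofactor_mod_p \<beta>s by blast
  then obtain \<gamma> where \<gamma>: "r = n \<longrightarrow> int p dvd \<gamma> - 1"
    and g: "[:int p ^ (k - r + 1):] dvd pcompose g [:0, int p:] - [:int p ^ (k - r) * \<gamma>:]"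
    by (rule rescaled_cofactor_mod_power)
  let ?B = "\<Prod>b\<leftarrow>\<beta>s. [:-b, 1:]"
  let ?G = "pcompose g [:0, int p:]"
  have "pcompose ((\<Prod>b\<leftarrow>\<beta>s. [:-(int p * b), 1:]) * g) [:0, int p:] = smult (int p ^ r) ?B * ?G"
    using \<beta>s by (simp only: pcompose_mult pcompose_prod_linear_scale)
  moreover have "[:int p ^ (k + 1):] dvd pcompose (trunc_poly p n a N) [:0, int p:]
      - pcompose ((\<Prod>b\<leftarrow>\<beta>s. [:-(int p * b), 1:]) * g) [:0, int p:]"
    using const_poly_dvd_pcompose[OF fg] by (simp only: pcompose_diff)
  ultimately have factor: "[:int p ^ (k + 1):] dvd pcompose (trunc_poly p n a N) [:0, int p:] - smult (int p ^ r) ?B * ?G"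
    by simp
  have "smult (int p ^ r) ?B * ?G - smult (int p ^ k * \<gamma>) ?B = [:int p ^ r:] * (?G - [:int p ^ (k - r) * \<gamma>:]) * ?B"
  proof -
    have "int p ^ k = int p ^ r * int p ^ (k - r)" using k r by (simp flip: power_add)
    then show ?thesis by (simp add: algebra_simps)
  qed
  moreover have "[:int p ^ (k + 1):] = [:int p ^ r:] * [:int p ^ (k - r + 1):]"
    using k r by (simp flip: power_add)
  ultimately have cofactor: "[:int p ^ (k + 1):] dvd smult (int p ^ r) ?B * ?G - smult (int p ^ k * \<gamma>) ?B"
    using dvd_mult2[OF mult_dvd_mono[OF dvd_refl g]] by metis
  from dvd_add[OF factor cofactor]
  have "[:int p ^ (k + 1):] dvd pcompose (trunc_poly p n a N) [:0, int p:] - smult (int p ^ k * \<gamma>) ?B"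
    by simp
  with N \<gamma> \<beta>s that show ?thesis by blast
qed

lemma digits_of_rescaled_congruence:
  assumes N: "k + 1 \<le> N" and j: "j < k"
    and cong: "[:int p ^ (k + 1):] dvd pcompose (trunc_poly p n a N) [:0, int p:] - smult (int p ^ k * \<gamma>) C"
  shows "(\<forall>i<k - j. a j i = 0) \<and> int (a j (k - j)) = (\<gamma> * coeff C j) mod int p"
proof -
  have "int p ^ (k + 1) dvd coeff (pcompose (trunc_poly p n a N) [:0, int p:] - smult (int p ^ k * \<gamma>) C) j"
    using cong by (simp only: const_poly_dvd_iff)
  then have "int p ^ (k + 1) dvd int p ^ j * zp_trunc p (a j) N - int p ^ k * \<gamma> * coeff C j"
    using j k by (simp add: coeff_pcompose_linear coeff_trunc_poly)
  moreover have "int p ^ (k + 1) = int p ^ j * int p ^ Suc (k - j)"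
    using j by (simp flip: power_add)
  moreover have "int p ^ j * zp_trunc p (a j) N - int p ^ k * \<gamma> * coeff C j
      = int p ^ j * (zp_trunc p (a j) N - int p ^ (k - j) * (\<gamma> * coeff C j))"
    using j by (simp add: algebra_simps flip: power_add)
  ultimately have "int p ^ Suc (k - j) dvd zp_trunc p (a j) N - int p ^ (k - j) * (\<gamma> * coeff C j)"
    using prime_gt_1_nat[OF prime] by simp
  moreover have "\<forall>i. a j i < p" using valid j k by (simp add: valid_coeffs_def)
  ultimately show ?thesis using digits_of_power_cong[OF prime_gt_1_nat[OF prime]] N by simp
qed

theorem digit_pattern_of_roots:
  "low_digits_vanish k a \<and>
   (\<exists>\<gamma> \<beta>s. \<gamma> \<in> (if r = n then {1} else {0..<int p}) \<and> length \<beta>s = r \<and> set \<beta>s \<subseteq> {0..<int p} \<and>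
      (\<forall>j<k. int (a j (k - j)) = coeff (smult \<gamma> (\<Prod>b\<leftarrow>\<beta>s. [:-b, 1:])) j mod int p))"
proof -
  obtain N \<gamma>0 \<beta>s0 where N: "k + 1 \<le> N" and \<gamma>0: "r = n \<longrightarrow> int p dvd \<gamma>0 - 1" and \<beta>s0: "length \<beta>s0 = r"
    and cong: "[:int p ^ (k + 1):] dvd
       pcompose (trunc_poly p n a N) [:0, int p:] - smult (int p ^ k * \<gamma>0) (\<Prod>b\<leftarrow>\<beta>s0. [:-b, 1:])"
    by (rule rescaled_trunc_poly_mod_power)
  define \<gamma> where "\<gamma> = \<gamma>0 mod int p"
  define \<beta>s where "\<beta>s = map (\<lambda>b. b mod int p) \<beta>s0"
  have digits: "(\<forall>i<k - j. a j i = 0) \<and> int (a j (k - j)) = (\<gamma>0 * coeff (\<Prod>b\<leftarrow>\<beta>s0. [:-b, 1:]) j) mod int p"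
    if "j < k" for j
    using digits_of_rescaled_congruence[OF N that cong] .
  have "[:int p:] dvd smult \<gamma>0 (\<Prod>b\<leftarrow>\<beta>s0. [:-b, 1:]) - smult \<gamma> (\<Prod>b\<leftarrow>\<beta>s. [:-b, 1:])"
    unfolding \<gamma>_def \<beta>s_def by (rule smult_prod_linear_mod)
  then have "\<forall>j<k. int (a j (k - j)) = coeff (smult \<gamma> (\<Prod>b\<leftarrow>\<beta>s. [:-b, 1:])) j mod int p"
    using digits by (auto simp: const_poly_dvd_iff mod_eq_dvd_iff)
  moreover have "\<gamma> \<in> (if r = n then {1} else {0..<int p})"
    using \<gamma>0 prime_gt_1_nat[OF prime] by (auto simp: \<gamma>_def mod_eq_dvd_iff[symmetric] simp del: of_nat_less_iff)
  moreover have "length \<beta>s = r" "set \<beta>s \<subseteq> {0..<int p}" using \<beta>s0 prime_gt_1_nat[OF prime] by (auto simp: \<beta>s_def)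
  moreover have "low_digits_vanish k a" using digits by (auto simp: low_digits_vanish_def)
  ultimately show ?thesis by blast
qed

end

section \<open>Counting digit patterns\<close>

definition residue_pattern :: "nat \<Rightarrow> nat \<Rightarrow> int poly \<Rightarrow> nat \<Rightarrow> nat" where
  "residue_pattern p k F = restrict (\<lambda>j. nat (coeff F j mod int p)) {..<k}"

text \<open>Splitting patterns force exactly \<open>r\<close> roots; every coefficient vector with \<open>r\<close> roots
  has one of the root patterns.\<close>

definition splitting_patterns :: "nat \<Rightarrow> nat \<Rightarrow> nat \<Rightarrow> nat \<Rightarrow> (nat \<Rightarrow> nat) set" where
  "splitting_patterns p n r k = (\<lambda>(\<gamma>, B). residue_pattern p k (smult \<gamma> (\<Prod>b\<in>B. [:-b, 1:]))) `
     ((if r = n then {1} else {1..<int p}) \<times> {B. B \<subseteq> {0..<int p} \<and> card B = r})"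

definition root_patterns :: "nat \<Rightarrow> nat \<Rightarrow> nat \<Rightarrow> nat \<Rightarrow> (nat \<Rightarrow> nat) set" where
  "root_patterns p n r k = (\<lambda>(\<gamma>, bs). residue_pattern p k (smult \<gamma> (\<Prod>b\<leftarrow>bs. [:-b, 1:]))) `
     ((if r = n then {1} else {0..<int p}) \<times> {bs. length bs = r \<and> set bs \<subseteq> {0..<int p}})"

lemma residue_pattern_PiE: "p > 0 \<Longrightarrow> residue_pattern p k F \<in> {..<k} \<rightarrow>\<^sub>E {..<p}"
  by (auto simp: residue_pattern_def nat_less_iff)

lemma residue_pattern_eq_iff:
  "p > 0 \<Longrightarrow> residue_pattern p k F = residue_pattern p k G \<longleftrightarrow> (\<forall>j<k. coeff F j mod int p = coeff G j mod int p)"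
  by (auto simp: residue_pattern_def restrict_def fun_eq_iff eq_nat_nat_iff)

lemma residue_pattern_apply:
  "j < k \<Longrightarrow> p > 0 \<Longrightarrow> int (residue_pattern p k F j) = coeff F j mod int p"
  by (simp add: residue_pattern_def)

lemma splitting_patterns_subset: "p > 0 \<Longrightarrow> splitting_patterns p n r k \<subseteq> {..<k} \<rightarrow>\<^sub>E {..<p}"
  using residue_pattern_PiE by (auto simp: splitting_patterns_def)

lemma root_patterns_subset: "p > 0 \<Longrightarrow> root_patterns p n r k \<subseteq> {..<k} \<rightarrow>\<^sub>E {..<p}"
  using residue_pattern_PiE by (auto simp: root_patterns_def)

lemma coeff_smult_prod_linear_above:
  assumes "finite B" "card B < j"
  shows "coeff (smult \<gamma> (\<Prod>b\<in>B. [:-b, 1::int:])) j = 0"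
  using assms by (simp add: coeff_eq_0 degree_prod_sum_eq)

lemma coeff_smult_prod_linear_top:
  assumes "finite B"
  shows "coeff (smult \<gamma> (\<Prod>b\<in>B. [:-b, 1::int:])) (card B) = \<gamma>"
  using assms lead_coeff_prod[of "\<lambda>b. [:-b, 1::int:]" B] by (simp add: degree_prod_sum_eq)

lemma residues_subset_if_reduction_dvd:
  assumes p: "prime p"
    and dvd: "[:int p:] dvd smult \<gamma> (\<Prod>b\<in>B. [:-b, 1:]) - smult \<gamma>' (\<Prod>b\<in>B'. [:-b, 1:])"
    and B: "B \<subseteq> {0..<int p}" and B': "B' \<subseteq> {0..<int p}" and unit: "\<not> int p dvd \<gamma>'"
  shows "B \<subseteq> B'"
proof
  fix t assume t: "t \<in> B"
  have fin: "finite B" "finite B'" using B B' finite_subset by auto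
  have "int p dvd poly (smult \<gamma> (\<Prod>b\<in>B. [:-b, 1:])) t - poly (smult \<gamma>' (\<Prod>b\<in>B'. [:-b, 1:])) t"
    using dvd by (intro const_poly_dvd_diff_imp_dvd_poly_diff) auto
  moreover have "poly (smult \<gamma> (\<Prod>b\<in>B. [:-b, 1:])) t = 0" using t fin by (simp add: poly_prod)
  moreover have "poly (smult \<gamma>' (\<Prod>b\<in>B'. [:-b, 1:])) t = \<gamma>' * (\<Prod>b\<in>B'. t - b)"
    by (simp add: poly_prod)
  ultimately have "int p dvd \<gamma>' * (\<Prod>b\<in>B'. t - b)" by (metis diff_0 dvd_minus_iff)
  then obtain b where b: "b \<in> B'" "int p dvd t - b"
    using p unit fin by (auto simp: prime_dvd_mult_iff prime_dvd_prod_iff)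
  then have "t = b" using t B B' by (intro eq_if_dvd_diff_less[of _ "int p"]) auto
  with b show "t \<in> B'" by simp
qed

context
  fixes p n r k :: nat
  assumes prime: "prime p" and r: "r \<le> n" "r = n \<or> r + 2 \<le> n" and k: "k = min (r + 1) n"
begin

lemma coeff_splitting_poly_above:
  assumes "finite B" "card B = r" "r = n \<Longrightarrow> \<gamma> = 1" "k \<le> j"
  shows "coeff (smult \<gamma> (\<Prod>b\<in>B. [:-b, 1::int:])) j = of_bool (k = n \<and> j = n)"
proof (cases "r = n \<and> j = n")
  case True
  then show ?thesis using assms coeff_smult_prod_linear_top[of B \<gamma>] k by simp
next
  case False
  then have "card B < j \<and> \<not> (k = n \<and> j = n)" using assms k r by auto
  then show ?thesis using coeff_smult_prod_linear_above[OF assms(1)] by auto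
qed

lemma splitting_pattern_inj: "inj_on (\<lambda>(\<gamma>, B). residue_pattern p k (smult \<gamma> (\<Prod>b\<in>B. [:-b, 1:])))
     ((if r = n then {1} else {1..<int p}) \<times> {B. B \<subseteq> {0..<int p} \<and> card B = r})"
proof (rule inj_onI)
  fix x y
  assume x: "x \<in> (if r = n then {1} else {1..<int p}) \<times> {B. B \<subseteq> {0..<int p} \<and> card B = r}"
    and y: "y \<in> (if r = n then {1} else {1..<int p}) \<times> {B. B \<subseteq> {0..<int p} \<and> card B = r}"
    and xy: "(\<lambda>(\<gamma>, B). residue_pattern p k (smult \<gamma> (\<Prod>b\<in>B. [:-b, 1:]))) x
      = (\<lambda>(\<gamma>, B). residue_pattern p k (smult \<gamma> (\<Prod>b\<in>B. [:-b, 1:]))) y"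
  define \<gamma>1 B1 \<gamma>2 B2 where "\<gamma>1 = fst x" "B1 = snd x" "\<gamma>2 = fst y" "B2 = snd y"
  have \<gamma>: "\<gamma>1 \<in> (if r = n then {1} else {1..<int p})" "\<gamma>2 \<in> (if r = n then {1} else {1..<int p})"
    and B: "B1 \<subseteq> {0..<int p}" "card B1 = r" "B2 \<subseteq> {0..<int p}" "card B2 = r"
    using x y by (auto simp: \<gamma>1_B1_\<gamma>2_B2_def mem_Times_iff)
  have eq: "residue_pattern p k (smult \<gamma>1 (\<Prod>b\<in>B1. [:-b, 1:])) = residue_pattern p k (smult \<gamma>2 (\<Prod>b\<in>B2. [:-b, 1:]))"
    using xy by (simp add: \<gamma>1_B1_\<gamma>2_B2_def case_prod_beta)
  let ?F1 = "smult \<gamma>1 (\<Prod>b\<in>B1. [:-b, 1:])" and ?F2 = "smult \<gamma>2 (\<Prod>b\<in>B2. [:-b, 1:])"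
  have fin: "finite B1" "finite B2" using B finite_subset by auto
  have low: "\<forall>j<k. coeff ?F1 j mod int p = coeff ?F2 j mod int p"
    using eq residue_pattern_eq_iff prime_gt_1_nat[OF prime] by simp
  moreover have "coeff ?F1 j = coeff ?F2 j" if "k \<le> j" for j
    using coeff_splitting_poly_above fin B \<gamma> that by (simp split: if_splits)
  ultimately have "int p dvd coeff (?F1 - ?F2) j" for j
    by (cases "j < k") (auto simp: mod_eq_dvd_iff simp del: coeff_smult)
  then have dvd12: "[:int p:] dvd ?F1 - ?F2" by (simp add: const_poly_dvd_iff del: coeff_smult)
  then have dvd21: "[:int p:] dvd ?F2 - ?F1" by (metis dvd_minus_iff minus_diff_eq)
  have units: "\<not> int p dvd \<gamma>1" "\<not> int p dvd \<gamma>2"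
    using \<gamma> prime_gt_1_nat[OF prime] by (auto split: if_splits simp: zdvd_not_zless)
  have "B1 \<subseteq> B2" using residues_subset_if_reduction_dvd[OF prime dvd12 B(1) B(3) units(2)] .
  moreover have "B2 \<subseteq> B1" using residues_subset_if_reduction_dvd[OF prime dvd21 B(3) B(1) units(1)] .
  ultimately have B12: "B1 = B2" by blast
  have "\<gamma>1 = \<gamma>2"
  proof (cases "r = n")
    case False
    then have "r < k" using k r by auto
    then have "\<gamma>1 mod int p = \<gamma>2 mod int p"
      using low coeff_smult_prod_linear_top fin B B12 by metis
    then show ?thesis using \<gamma> False by simp
  qed (use \<gamma> in simp)
  with B12 show "x = y" by (simp add: \<gamma>1_B1_\<gamma>2_B2_def prod_eq_iff)
qed

lemma card_splitting_patterns:
  "card (splitting_patterns p n r k) = (if r = n then 1 else p - 1) * (p choose r)"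
proof -
  have "card (splitting_patterns p n r k)
      = card ((if r = n then {1} else {1..<int p}) \<times> {B. B \<subseteq> {0..<int p} \<and> card B = r})"
    unfolding splitting_patterns_def by (rule card_image[OF splitting_pattern_inj])
  also have "\<dots> = (if r = n then 1 else p - 1) * (p choose r)"
    using prime_gt_1_nat[OF prime] by (simp add: card_cartesian_product n_subsets nat_diff_distrib)
  finally show ?thesis .
qed

end

lemma card_residue_patterns_of_lists:
  assumes "r \<le> p"
  shows "card ((\<lambda>bs. residue_pattern p k (smult \<gamma> (\<Prod>b\<leftarrow>bs. [:-b, 1:]))) ` {bs. length bs = r \<and> set bs \<subseteq> {0..<int p}})
     \<le> (p choose r) + (p ^ r - \<Prod>{p - r + 1..p})"
proof -
  let ?f = "\<lambda>bs. residue_pattern p k (smult \<gamma> (\<Prod>b\<leftarrow>bs. [:-b, 1:]))"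
  let ?L = "{bs. length bs = r \<and> set bs \<subseteq> {0..<int p}}"
  let ?D = "{bs. length bs = r \<and> distinct bs \<and> set bs \<subseteq> {0..<int p}}"
  let ?Bs = "{B. B \<subseteq> {0..<int p} \<and> card B = r}"
  have fin: "finite ?L" using finite_lists_length_eq[of "{0..<int p}" r] by (simp add: conj_commute)
  have "card ?L = p ^ r" using card_lists_length_eq[of "{0..<int p}" r] by (simp add: conj_commute)
  moreover have "card ?D = \<Prod>{p - r + 1..p}"
    using card_lists_distinct_length_eq[of "{0..<int p}" r] assms by simp
  ultimately have non_distinct: "card (?L - ?D) = p ^ r - \<Prod>{p - r + 1..p}"
    using card_Diff_subset[of ?D ?L] finite_subset[of ?D ?L] fin by auto
  have "?f ` ?D \<subseteq> (\<lambda>B. residue_pattern p k (smult \<gamma> (\<Prod>b\<in>B. [:-b, 1:]))) ` ?Bs"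
  proof
    fix c assume "c \<in> ?f ` ?D"
    then obtain bs where bs: "bs \<in> ?D" "c = ?f bs" by blast
    then have "c = residue_pattern p k (smult \<gamma> (\<Prod>b\<in>set bs. [:-b, 1:]))"
      by (simp add: prod.distinct_set_conv_list)
    moreover have "set bs \<in> ?Bs" using bs by (auto simp: distinct_card)
    ultimately show "c \<in> (\<lambda>B. residue_pattern p k (smult \<gamma> (\<Prod>b\<in>B. [:-b, 1:]))) ` ?Bs" by blast
  qed
  then have "card (?f ` ?D) \<le> card ((\<lambda>B. residue_pattern p k (smult \<gamma> (\<Prod>b\<in>B. [:-b, 1:]))) ` ?Bs)"
    by (rule card_mono[rotated]) simp
  also have "\<dots> \<le> card ?Bs" by (rule card_image_le) simp
  also have "card ?Bs = p choose r" by (simp add: n_subsets)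
  finally have "card (?f ` ?D) \<le> p choose r" .
  moreover have "card (?f ` (?L - ?D)) \<le> p ^ r - \<Prod>{p - r + 1..p}"
    using card_image_le[of "?L - ?D" ?f] fin non_distinct by simp
  moreover have "?f ` ?L = ?f ` ?D \<union> ?f ` (?L - ?D)" by auto
  ultimately show ?thesis using card_Un_le[of "?f ` ?D" "?f ` (?L - ?D)"] by simp
qed

lemma card_root_patterns_le:
  assumes "r \<le> p"
  shows "card (root_patterns p n r k) \<le> (if r = n then 1 else p) * ((p choose r) + (p ^ r - \<Prod>{p - r + 1..p}))"
proof -
  let ?G = "if r = n then {1} else {0..<int p}"
  let ?L = "{bs. length bs = r \<and> set bs \<subseteq> {0..<int p}}"
  have GL: "?G \<times> ?L = (\<Union>\<gamma>\<in>?G. Pair \<gamma> ` ?L)" by auto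
  have "root_patterns p n r k = (\<Union>\<gamma>\<in>?G. (\<lambda>bs. residue_pattern p k (smult \<gamma> (\<Prod>b\<leftarrow>bs. [:-b, 1:]))) ` ?L)"
    unfolding root_patterns_def GL image_UN image_image by simp
  then have "card (root_patterns p n r k) \<le> (\<Sum>\<gamma>\<in>?G. card ((\<lambda>bs. residue_pattern p k (smult \<gamma> (\<Prod>b\<leftarrow>bs. [:-b, 1:]))) ` ?L))"
    by (simp add: card_UN_le)
  also have "\<dots> \<le> (\<Sum>\<gamma>\<in>?G. (p choose r) + (p ^ r - \<Prod>{p - r + 1..p}))"
    by (intro sum_mono card_residue_patterns_of_lists assms)
  also have "\<dots> = (if r = n then 1 else p) * ((p choose r) + (p ^ r - \<Prod>{p - r + 1..p}))"
    by simp
  finally show ?thesis .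
qed

section \<open>Asymptotics of binomial coefficients\<close>

lemma falling_product_bounds:
  assumes "r \<le> p"
  shows "(p - r) ^ r \<le> \<Prod>{p - r + 1..p}" "\<Prod>{p - r + 1..p} \<le> p ^ r"
proof -
  have c: "card {p - r + 1..p} = r" using assms by simp
  have "(\<Prod>x\<in>{p - r + 1..p}. (p - r)) \<le> (\<Prod>x\<in>{p - r + 1..p}. x)" by (intro prod_mono) auto
  then show "(p - r) ^ r \<le> \<Prod>{p - r + 1..p}" using c by simp
  have "(\<Prod>x\<in>{p - r + 1..p}. x) \<le> (\<Prod>x\<in>{p - r + 1..p}. p)" by (intro prod_mono) auto
  then show "\<Prod>{p - r + 1..p} \<le> p ^ r" using c by simp
qed

lemma fact_mult_binomial_eq_falling_product: "r \<le> p \<Longrightarrow> fact r * (p choose r) = \<Prod>{p - r + 1..p}"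
proof -
  assume rp: "r \<le> p"
  have "fact r * fact (p - r) * (p choose r) = (fact p :: nat)" using binomial_fact_lemma[OF rp] .
  then have "fact p div fact (p - r) = fact r * (p choose r)"
    by (metis fact_nonzero nonzero_mult_div_cancel_right mult.commute mult.assoc)
  moreover have "fact p div fact (p - r) = \<Prod>{p - r + 1..p}" using fact_div_fact[of "p - r" p] by simp
  ultimately show ?thesis by simp
qed

lemma falling_product_over_power_tendsto: "(\<lambda>p. real (\<Prod>{p - r + 1..p}) / real p ^ r) \<longlonglongrightarrow> 1"
proof (rule tendsto_sandwich[of "\<lambda>p. (1 - real r / real p) ^ r" _ _ "\<lambda>p. 1"])
  show "\<forall>\<^sub>F p in sequentially. (1 - real r / real p) ^ r \<le> real (\<Prod>{p - r + 1..p}) / real p ^ r"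
    using eventually_ge_at_top[of "Suc r"]
  proof eventually_elim
    case (elim p)
    then have rp: "r \<le> p" and p0: "p > 0" by auto
    have "(1 - real r / real p) ^ r = real ((p - r) ^ r) / real p ^ r"
      using rp p0 by (simp add: of_nat_diff field_simps power_divide)
    also have "\<dots> \<le> real (\<Prod>{p - r + 1..p}) / real p ^ r"
      using falling_product_bounds(1)[OF rp] by (intro divide_right_mono) (simp_all only: of_nat_le_iff, auto)
    finally show ?case .
  qed
  show "\<forall>\<^sub>F p in sequentially. real (\<Prod>{p - r + 1..p}) / real p ^ r \<le> 1"
    using eventually_ge_at_top[of "Suc r"]
  proof eventually_elim
    case (elim p)
    then have rp: "r \<le> p" and p0: "p > 0" by auto
    have "real (\<Prod>{p - r + 1..p}) \<le> real p ^ r" using falling_product_bounds(2)[OF rp] by (metis of_nat_le_iff of_nat_power)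
    then show ?case using p0 by simp
  qed
  have "(\<lambda>p. 1 - real r / real p) \<longlonglongrightarrow> 1 - 0"
    by (intro tendsto_diff tendsto_const tendsto_divide_0[OF tendsto_const] filterlim_at_top_imp_at_infinity[OF filterlim_real_sequentially])
  then show "(\<lambda>p. (1 - real r / real p) ^ r) \<longlonglongrightarrow> 1"
    using tendsto_power[of "\<lambda>p. 1 - real r / real p" 1 sequentially r] by simp
qed simp

lemma binomial_over_power_tendsto: "(\<lambda>p. real (p choose r) / real p ^ r) \<longlonglongrightarrow> 1 / fact r"
proof -
  have "(\<lambda>p. (real (\<Prod>{p - r + 1..p}) / real p ^ r) / fact r) \<longlonglongrightarrow> 1 / fact r"
    by (intro tendsto_divide falling_product_over_power_tendsto tendsto_const) simp
  moreover have "\<forall>\<^sub>F p in sequentially. (real (\<Prod>{p - r + 1..p}) / real p ^ r) / fact r = real (p choose r) / real p ^ r"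
    using eventually_ge_at_top[of r]
  proof eventually_elim
    case (elim p)
    have "real (\<Prod>{p - r + 1..p}) = fact r * real (p choose r)"
      using fact_mult_binomial_eq_falling_product[OF elim] by (metis of_nat_fact of_nat_mult)
    then show ?case by simp
  qed
  ultimately show ?thesis by (rule Lim_transform_eventually)
qed

section \<open>The Haar measure on coefficient vectors\<close>

abbreviation pZp_digit_measure :: "nat \<Rightarrow> nat \<Rightarrow> nat measure" where
  "pZp_digit_measure p \<equiv> (\<lambda>j. if j = 0 then return (count_space UNIV) 0 else digit_measure p)"

lemma prob_space_pZp_digit_measure: "prob_space (pZp_digit_measure p j)"
  by (auto simp: digit_measure_def prob_space_measure_pmf intro: prob_space_return)

lemma space_digit_measure [simp]: "space (digit_measure p) = UNIV"
  by (simp add: digit_measure_def)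

lemma sets_digit_measure [simp]: "sets (digit_measure p) = UNIV"
  by (simp add: digit_measure_def)

lemma space_pZp_digit_measure [simp]: "space (pZp_digit_measure p j) = UNIV"
  by simp

lemma sets_pZp_digit_measure [simp]: "sets (pZp_digit_measure p j) = UNIV"
  by simp

lemma product_prob_spaceI: "(\<And>i. prob_space (M i)) \<Longrightarrow> product_prob_space M"
  unfolding product_prob_space_def product_prob_space_axioms_def product_sigma_finite_def
  using prob_space_imp_sigma_finite by blast

interpretation digits: product_prob_space "pZp_digit_measure p" UNIV for p
  by (rule product_prob_spaceI) (rule prob_space_pZp_digit_measure)

lemma space_pZp_haar [simp]: "space (pZp_haar p) = UNIV"
  by (simp add: pZp_haar_def space_PiM)

lemma prob_space_pZp_haar: "prob_space (pZp_haar p)"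
  unfolding pZp_haar_def by (rule prob_space_PiM) (rule prob_space_pZp_digit_measure)

interpretation coeffs: product_prob_space "\<lambda>_. pZp_haar p" I for p I
  by (rule product_prob_spaceI) (rule prob_space_pZp_haar)

lemma prob_space_coeff_measure: "prob_space (coeff_measure p n)"
  unfolding coeff_measure_def by (rule prob_space_PiM) (rule prob_space_pZp_haar)

lemma space_coeff_measure: "space (coeff_measure p n) = {..<n} \<rightarrow>\<^sub>E UNIV"
  by (simp add: coeff_measure_def space_PiM)

lemma emeasure_digit_measure_singleton: "p > 0 \<Longrightarrow> v < p \<Longrightarrow> emeasure (digit_measure p) {v} = ennreal (1 / real p)"
  unfolding digit_measure_def emeasure_pmf_single by (subst pmf_of_set) auto

definition digit_cylinder :: "nat \<Rightarrow> nat \<Rightarrow> nat \<Rightarrow> (nat \<Rightarrow> nat) set" where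
  "digit_cylinder k j v = {z. (\<forall>i. 1 \<le> i \<and> i < k - j \<longrightarrow> z i = 0) \<and> z (k - j) = v}"

lemma digit_cylinder_eq_prod_emb:
  assumes jk: "j < k"
  shows "digit_cylinder k j v =
    prod_emb UNIV (pZp_digit_measure p) {1..k - j} (\<Pi>\<^sub>E i\<in>{1..k - j}. if i = k - j then {v} else {0})"
    (is "_ = ?E")
proof (intro set_eqI iffI)
  fix z assume "z \<in> digit_cylinder k j v"
  then show "z \<in> ?E" by (auto simp: digit_cylinder_def prod_emb_def space_PiM PiE_iff)
next
  fix z assume "z \<in> ?E"
  then have z: "\<And>i. i \<in> {1..k - j} \<Longrightarrow> z i \<in> (if i = k - j then {v} else {0})"
    by (auto simp: prod_emb_def PiE_iff)
  have "z i = 0" if "1 \<le> i" "i < k - j" for i using z[of i] that by auto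
  moreover have "z (k - j) = v" using z[of "k - j"] jk by auto
  ultimately show "z \<in> digit_cylinder k j v" by (simp add: digit_cylinder_def)
qed

lemma digit_cylinder_sets: "j < k \<Longrightarrow> digit_cylinder k j v \<in> sets (pZp_haar p)"
  unfolding pZp_haar_def by (subst digit_cylinder_eq_prod_emb[of j k v p]) (auto intro!: sets_PiM_I)

lemma emeasure_digit_cylinder:
  assumes "p > 0" "v < p" "j < k"
  shows "emeasure (pZp_haar p) (digit_cylinder k j v) = ennreal ((1 / real p) ^ (k - j))"
proof -
  have "emeasure (pZp_haar p) (digit_cylinder k j v) = (\<Prod>i\<in>{1..k - j}. emeasure (pZp_digit_measure p i) (if i = k - j then {v} else {0}))"
  proof -
    have "emeasure (PiM UNIV (pZp_digit_measure p))
        (prod_emb UNIV (pZp_digit_measure p) {1..k - j} (\<Pi>\<^sub>E i\<in>{1..k - j}. if i = k - j then {v} else {0}))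
       = (\<Prod>i\<in>{1..k - j}. emeasure (pZp_digit_measure p i) (if i = k - j then {v} else {0}))"
      by (rule digits.emeasure_PiM_emb) auto
    then show ?thesis unfolding pZp_haar_def using digit_cylinder_eq_prod_emb[OF assms(3), of v p] by simp
  qed
  also have "\<dots> = (\<Prod>i\<in>{1..k - j}. ennreal (1 / real p))"
    using assms by (intro prod.cong refl) (auto simp: emeasure_digit_measure_singleton)
  also have "\<dots> = ennreal ((1 / real p) ^ (k - j))" by (simp add: ennreal_power)
  finally show ?thesis .
qed

lemma UNIV_in_sets_pZp_haar: "UNIV \<in> sets (pZp_haar p)"
  using sets.top[of "pZp_haar p"] by simp

definition pattern_cylinder :: "nat \<Rightarrow> nat \<Rightarrow> (nat \<Rightarrow> nat) \<Rightarrow> (nat \<Rightarrow> nat \<Rightarrow> nat) set" where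
  "pattern_cylinder n k c = (\<Pi>\<^sub>E j\<in>{..<n}. (if j < k then digit_cylinder k j (c j) else UNIV))"

definition pattern_event :: "nat \<Rightarrow> nat \<Rightarrow> (nat \<Rightarrow> nat) set \<Rightarrow> (nat \<Rightarrow> nat \<Rightarrow> nat) set" where
  "pattern_event n k S = (\<Union>c\<in>S. pattern_cylinder n k c)"

lemma pattern_cylinder_sets: "pattern_cylinder n k c \<in> sets (coeff_measure p n)"
  unfolding coeff_measure_def pattern_cylinder_def by (rule sets_PiM_I_finite) (auto intro: digit_cylinder_sets UNIV_in_sets_pZp_haar)

lemma pattern_event_sets: "finite S \<Longrightarrow> pattern_event n k S \<in> sets (coeff_measure p n)"
  unfolding pattern_event_def by (intro sets.finite_UN pattern_cylinder_sets)

lemma emeasure_pattern_cylinder: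
  assumes p: "p > 0" and c: "c \<in> {..<k} \<rightarrow>\<^sub>E {..<p}" and kn: "k \<le> n"
  shows "emeasure (coeff_measure p n) (pattern_cylinder n k c) = ennreal ((1 / real p) ^ (\<Sum>j<k. k - j))"
proof -
  have "emeasure (coeff_measure p n) (\<Pi>\<^sub>E j\<in>{..<n}. (if j < k then digit_cylinder k j (c j) else UNIV))
     = (\<Prod>j<n. emeasure (pZp_haar p) (if j < k then digit_cylinder k j (c j) else UNIV))"
    unfolding coeff_measure_def
    by (rule coeffs.emeasure_PiM) (auto intro: digit_cylinder_sets UNIV_in_sets_pZp_haar)
  also have "\<dots> = (\<Prod>j<n. (if j < k then ennreal ((1 / real p) ^ (k - j)) else 1))"
  proof (intro prod.cong refl)
    fix j assume "j \<in> {..<n}"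
    show "emeasure (pZp_haar p) (if j < k then digit_cylinder k j (c j) else UNIV) = (if j < k then ennreal ((1 / real p) ^ (k - j)) else 1)"
    proof (cases "j < k")
      case True
      then have "c j < p" using c by auto
      then show ?thesis using True emeasure_digit_cylinder[OF p] by simp
    next
      case False
      then show ?thesis using prob_space.emeasure_space_1[OF prob_space_pZp_haar, of p] by simp
    qed
  qed
  also have "\<dots> = (\<Prod>j<k. ennreal ((1 / real p) ^ (k - j)))"
  proof -
    have "(\<Prod>j<n. (if j < k then ennreal ((1 / real p) ^ (k - j)) else 1))
        = (\<Prod>j\<in>{..<k}. (if j < k then ennreal ((1 / real p) ^ (k - j)) else 1))"
      using kn by (intro prod.mono_neutral_right) auto
    then show ?thesis by simp
  qed
  also have "\<dots> = ennreal (\<Prod>j<k. (1 / real p) ^ (k - j))" by (simp add: prod_ennreal)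
  also have "(\<Prod>j<k. (1 / real p) ^ (k - j)) = (1 / real p) ^ (\<Sum>j<k. k - j)" by (simp add: power_sum)
  finally show ?thesis by (simp add: pattern_cylinder_def)
qed

lemma disjoint_family_on_pattern_cylinder:
  assumes "S \<subseteq> {..<k} \<rightarrow>\<^sub>E X" "k \<le> n"
  shows "disjoint_family_on (pattern_cylinder n k) S"
  unfolding disjoint_family_on_def
proof (intro ballI impI)
  fix c c' assume c: "c \<in> S" "c' \<in> S" "c \<noteq> c'"
  moreover have "c \<in> {..<k} \<rightarrow>\<^sub>E X" "c' \<in> {..<k} \<rightarrow>\<^sub>E X" using c assms(1) by auto
  ultimately obtain j where j: "j < k" "c j \<noteq> c' j"
    using PiE_ext[of c "{..<k}" "\<lambda>_. X" c'] by auto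
  have "a j (k - j) = d j" if "a \<in> pattern_cylinder n k d" for a d
    using PiE_mem[OF that[unfolded pattern_cylinder_def], of j] j(1) assms(2)
    by (simp add: digit_cylinder_def)
  then show "pattern_cylinder n k c \<inter> pattern_cylinder n k c' = {}" using j(2) by (metis disjoint_iff)
qed

lemma measure_pattern_event:
  assumes p: "p > 0" and S: "S \<subseteq> {..<k} \<rightarrow>\<^sub>E {..<p}" and kn: "k \<le> n"
  shows "measure (coeff_measure p n) (pattern_event n k S) = real (card S) * (1 / real p) ^ (\<Sum>j<k. k - j)"
proof -
  interpret F: prob_space "coeff_measure p n" by (rule prob_space_coeff_measure)
  have finS: "finite S" by (rule finite_subset[OF S]) (intro finite_PiE; simp)
  let ?A = "pattern_cylinder n k"
  have disj: "disjoint_family_on ?A S" using S kn by (rule disjoint_family_on_pattern_cylinder)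
  have "measure (coeff_measure p n) (pattern_event n k S) = (\<Sum>c\<in>S. measure (coeff_measure p n) (?A c))"
    unfolding pattern_event_def by (rule F.finite_measure_finite_Union[OF finS _ disj]) (auto intro: pattern_cylinder_sets)
  also have "\<dots> = (\<Sum>c\<in>S. (1 / real p) ^ (\<Sum>j<k. k - j))"
  proof (intro sum.cong refl)
    fix c assume "c \<in> S"
    then have "emeasure (coeff_measure p n) (?A c) = ennreal ((1 / real p) ^ (\<Sum>j<k. k - j))"
      using emeasure_pattern_cylinder[OF p _ kn] S by blast
    then show "measure (coeff_measure p n) (?A c) = (1 / real p) ^ (\<Sum>j<k. k - j)"
      by (simp add: F.emeasure_eq_measure)
  qed
  finally show ?thesis by simp
qed

lemma AE_valid_coeffs:
  assumes p: "p > 0"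
  shows "AE a in coeff_measure p n. valid_coeffs p n a"
proof -
  have z: "AE z in pZp_haar p. z 0 = 0 \<and> (\<forall>i. z i < p)"
  proof -
    have "AE z in pZp_haar p. z i \<in> (if i = 0 then {0} else {..<p})" for i
    proof -
      have "AE x in pZp_digit_measure p i. x \<in> (if i = 0 then {0} else {..<p})"
      proof (cases "i = 0")
        case True then show ?thesis by (simp add: AE_return)
      next
        case False
        have "AE x in digit_measure p. x < p" unfolding digit_measure_def using p by (subst AE_measure_pmf_iff, subst set_pmf_of_set) auto
        then show ?thesis using False by simp
      qed
      then show ?thesis unfolding pZp_haar_def by (rule digits.AE_component[rotated]) simp
    qed
    then have "AE z in pZp_haar p. \<forall>i. z i \<in> (if i = 0 then {0} else {..<p})" by (simp add: AE_all_countable)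
    then show ?thesis
    proof (rule AE_mp, intro AE_I2 impI)
      fix z assume z: "\<forall>i. z i \<in> (if i = 0 then {0} else {..<p})"
      have "z i < p" for i using z[rule_format, of i] p by (cases "i = 0") auto
      moreover have "z 0 = 0" using z[rule_format, of 0] by simp
      ultimately show "z 0 = 0 \<and> (\<forall>i. z i < p)" by blast
    qed
  qed
  have "AE a in coeff_measure p n. \<forall>j\<in>{..<n}. a j 0 = 0 \<and> (\<forall>i. a j i < p)"
    unfolding coeff_measure_def
  proof (rule AE_finite_allI)
    fix j assume j: "j \<in> {..<n}"
    show "AE a in PiM {..<n} (\<lambda>_. pZp_haar p). a j 0 = 0 \<and> (\<forall>i. a j i < p)"
      by (rule coeffs.AE_component[OF j z])
  qed simp
  then show ?thesis unfolding valid_coeffs_def by (simp add: lessThan_iff Ball_def)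
qed

section \<open>Measurability of the root count\<close>

definition digit_list :: "nat \<Rightarrow> nat \<Rightarrow> (nat \<Rightarrow> nat \<Rightarrow> nat) \<Rightarrow> nat list" where
  "digit_list n m a = map (\<lambda>q. a (q div m) (q mod m)) [0..<n * m]"

lemma digit_event_sets:
  assumes "j < n"
  shows "{a \<in> space (coeff_measure p n). a j i = v} \<in> sets (coeff_measure p n)"
proof -
  have "(\<lambda>a. a j) \<in> measurable (coeff_measure p n) (pZp_haar p)"
    unfolding coeff_measure_def using assms by (intro measurable_component_singleton) simp
  moreover have "(\<lambda>z. z i) \<in> measurable (pZp_haar p) (pZp_digit_measure p i)"
    unfolding pZp_haar_def by (intro measurable_component_singleton) simp
  ultimately have "(\<lambda>a. a j i) \<in> measurable (coeff_measure p n) (pZp_digit_measure p i)"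
    using measurable_comp by (fastforce simp: o_def)
  from measurable_sets[OF this, of "{v}"] show ?thesis
    by (simp add: vimage_def Int_def conj_commute)
qed

lemma measurable_digit_list: "digit_list n m \<in> measurable (coeff_measure p n) (count_space UNIV)"
proof (subst measurable_count_space_eq2_countable, intro conjI ballI)
  fix l :: "nat list"
  show "digit_list n m -` {l} \<inter> space (coeff_measure p n) \<in> sets (coeff_measure p n)"
  proof (cases "length l = n * m")
    case True
    have "digit_list n m -` {l} \<inter> space (coeff_measure p n) =
        {a \<in> space (coeff_measure p n). \<forall>q\<in>{..<n * m}. a (q div m) (q mod m) = l ! q}"
      using True by (auto simp: digit_list_def list_eq_iff_nth_eq)
    moreover have "Measurable.pred (coeff_measure p n) (\<lambda>a. \<forall>q\<in>{..<n * m}. a (q div m) (q mod m) = l ! q)"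
    proof (rule pred_intros_finite(3))
      fix q assume "q \<in> {..<n * m}"
      then have "q div m < n" by (metis lessThan_iff less_mult_imp_div_less mult.commute)
      then show "Measurable.pred (coeff_measure p n) (\<lambda>a. a (q div m) (q mod m) = l ! q)"
        unfolding pred_def by (rule digit_event_sets)
    qed simp
    ultimately show ?thesis by (simp add: pred_def)
  next
    case False
    then have "digit_list n m -` {l} \<inter> space (coeff_measure p n) = {}"
      by (auto simp: digit_list_def)
    then show ?thesis by simp
  qed
qed simp

lemma digit_list_nth: "j < n \<Longrightarrow> i < m \<Longrightarrow> digit_list n m a ! (j * m + i) = a j i"
proof -
  assume j: "j < n" and i: "i < m"
  have "j * m + i < Suc j * m" using i by simp
  also have "\<dots> \<le> n * m" using j by (intro mult_right_mono) auto
  finally show ?thesis using i by (simp add: digit_list_def)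
qed

lemma pred_determined_by_digit_list:
  assumes "\<And>a b. digit_list n m a = digit_list n m b \<Longrightarrow> P a \<longleftrightarrow> P b"
  shows "Measurable.pred (coeff_measure p n) P"
proof -
  define Q where "Q l \<longleftrightarrow> (\<exists>b. digit_list n m b = l \<and> P b)" for l
  have "P = (\<lambda>a. Q (digit_list n m a))"
    unfolding Q_def fun_eq_iff using assms by blast
  moreover have "{a \<in> space (coeff_measure p n). Q (digit_list n m a)}
      = digit_list n m -` {l. Q l} \<inter> space (coeff_measure p n)" by auto
  then have "Measurable.pred (coeff_measure p n) (\<lambda>a. Q (digit_list n m a))"
    using measurable_sets[OF measurable_digit_list, of "{l. Q l}"] by (simp add: pred_def)
  ultimately show ?thesis by simp
qed

lemma trunc_poly_eq_if_digit_list_eq: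
  assumes "digit_list n m a = digit_list n m b"
  shows "trunc_poly p n a m = trunc_poly p n b m"
proof -
  have "zp_trunc p (a j) m = zp_trunc p (b j) m" if "j < n" for j
    using digit_list_nth[OF that] assms by (intro zp_trunc_cong) metis
  then show ?thesis by (simp add: trunc_poly_def)
qed

text \<open>By compactness the liftable residues are exactly the residues of roots; unlike
  roots, they are described by finitely many digits at a time, which makes the root count
  measurable.\<close>

definition approx_root :: "nat \<Rightarrow> nat \<Rightarrow> (nat \<Rightarrow> nat \<Rightarrow> nat) \<Rightarrow> nat \<Rightarrow> int \<Rightarrow> bool" where
  "approx_root p n a m t \<longleftrightarrow> 0 \<le> t \<and> t < int p ^ m \<and> int p ^ m dvd poly (trunc_poly p n a m) t"

definition liftable :: "nat \<Rightarrow> nat \<Rightarrow> (nat \<Rightarrow> nat \<Rightarrow> nat) \<Rightarrow> nat \<Rightarrow> int \<Rightarrow> bool" where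
  "liftable p n a D t \<longleftrightarrow> (\<forall>m\<ge>D. \<exists>t'. approx_root p n a m t' \<and> t' mod int p ^ D = t)"

lemma pred_liftable: "Measurable.pred (coeff_measure p n) (\<lambda>a. liftable p n a D t)"
proof -
  have "liftable p n a D t \<longleftrightarrow>
      (\<forall>m. D \<le> m \<longrightarrow> (\<exists>t'\<in>{0..<int p ^ m}. int p ^ m dvd poly (trunc_poly p n a m) t' \<and> t' mod int p ^ D = t))" for a
    unfolding liftable_def approx_root_def by (auto simp: Bex_def)
  moreover have "Measurable.pred (coeff_measure p n)
      (\<lambda>a. int p ^ m dvd poly (trunc_poly p n a m) t' \<and> t' mod int p ^ D = t)" for m t'
  proof (rule pred_determined_by_digit_list[of n m])
    fix a b :: "nat \<Rightarrow> nat \<Rightarrow> nat"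
    assume "digit_list n m a = digit_list n m b"
    then have "trunc_poly p n a m = trunc_poly p n b m" by (rule trunc_poly_eq_if_digit_list_eq)
    then show "(int p ^ m dvd poly (trunc_poly p n a m) t' \<and> t' mod int p ^ D = t)
        \<longleftrightarrow> (int p ^ m dvd poly (trunc_poly p n b m) t' \<and> t' mod int p ^ D = t)" by simp
  qed
  ultimately show ?thesis
    by (simp only:) (intro pred_intros_countable pred_intros_imp' pred_intros_finite; simp)
qed

lemma approx_root_mod:
  assumes "approx_root p n a m t" "m' \<le> m" "p > 0"
  shows "approx_root p n a m' (t mod int p ^ m')"
  using assms padic_compatible_dvd_mono[OF padic_compatible_trunc_poly, of m' m p n a t "t mod int p ^ m'"]
  by (simp add: approx_root_def mod_eq_dvd_iff[symmetric])

lemma liftable_zp_trunc_root: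
  assumes x: "is_zp_root p n a x"
  shows "liftable p n a D (zp_trunc p x D)"
  unfolding liftable_def
proof (intro allI impI)
  fix m assume m: "D \<le> m"
  have digits: "\<forall>i. x i < p" using x by (simp add: is_zp_root_def)
  have "approx_root p n a m (zp_trunc p x m)"
    using x zp_trunc_nonneg zp_trunc_less digits
    by (auto simp: approx_root_def is_zp_root_iff_padic_root padic_root_def)
  moreover have "zp_trunc p x m mod int p ^ D = zp_trunc p x D" using zp_trunc_mod[OF digits m] .
  ultimately show "\<exists>t'. approx_root p n a m t' \<and> t' mod int p ^ D = zp_trunc p x D" by blast
qed

lemma liftable_step:
  assumes p: "p > 0" and lift: "liftable p n a D t"
  shows "\<exists>d. 0 \<le> d \<and> d < int p \<and> liftable p n a (Suc D) (t + int p ^ D * d)"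
proof (rule ccontr)
  assume "\<not> ?thesis"
  then have "\<exists>m. m \<ge> Suc D \<and> (\<forall>t'. approx_root p n a m t' \<longrightarrow> t' mod int p ^ Suc D \<noteq> t + int p ^ D * d)"
    if "0 \<le> d" "d < int p" for d
    using that unfolding liftable_def by auto
  then obtain level where level: "\<And>d. 0 \<le> d \<Longrightarrow> d < int p \<Longrightarrow> level d \<ge> Suc D \<and>
      (\<forall>t'. approx_root p n a (level d) t' \<longrightarrow> t' mod int p ^ Suc D \<noteq> t + int p ^ D * d)"
    by metis
  define M where "M = Max (level ` {0..<int p})"
  have level_le: "level d \<le> M" if "0 \<le> d" "d < int p" for d
    unfolding M_def using that by (intro Max_ge) auto
  have "D \<le> M" using level[of 0] level_le[of 0] p by fastforce
  then obtain t' where t': "approx_root p n a M t'" "t' mod int p ^ D = t"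
    using lift unfolding liftable_def by blast
  define d where "d = (t' div int p ^ D) mod int p"
  have d: "0 \<le> d" "d < int p" using p by (auto simp: d_def)
  have "int p ^ Suc D dvd int p ^ level d" using level[OF d] by (intro le_imp_power_dvd) simp
  then have "(t' mod int p ^ level d) mod int p ^ Suc D = t + int p ^ D * d"
    using mod_power_Suc[of t' p D] t'(2) by (simp add: d_def mod_mod_cancel)
  moreover have "approx_root p n a (level d) (t' mod int p ^ level d)"
    using approx_root_mod[OF t'(1) level_le[OF d] p] .
  ultimately show False using level[OF d] by blast
qed

lemma liftable_imp_root:
  assumes p: "p > 0" and lift: "liftable p n a D t" and t: "0 \<le> t" "t < int p ^ D"
  shows "\<exists>x. is_zp_root p n a x \<and> zp_trunc p x D = t"
proof -
  obtain x where x: "\<forall>i. x i < p" "zp_trunc p x D = t" "\<forall>m\<ge>D. liftable p n a m (zp_trunc p x m)"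
    using exists_digits_along_lifts[of p "liftable p n a" D t] p lift t liftable_step by blast
  have "int p ^ m dvd poly (trunc_poly p n a m) (zp_trunc p x m)" if "D \<le> m" for m
  proof -
    have "liftable p n a m (zp_trunc p x m)" using x(3) that by blast
    then obtain t' where "approx_root p n a m t'" "t' mod int p ^ m = zp_trunc p x m"
      unfolding liftable_def using order_refl by blast
    then show ?thesis by (simp add: approx_root_def)
  qed
  then have "is_zp_root p n a x"
    unfolding is_zp_root_iff_padic_root using x(1) by (intro padic_rootI[OF padic_compatible_trunc_poly])
  with x(2) show ?thesis by blast
qed

definition has_roots_at_least :: "nat \<Rightarrow> nat \<Rightarrow> (nat \<Rightarrow> nat \<Rightarrow> nat) \<Rightarrow> nat \<Rightarrow> bool" where
  "has_roots_at_least p n a s \<longleftrightarrow> (\<exists>X. X \<subseteq> {x. is_zp_root p n a x} \<and> finite X \<and> card X = s)"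

lemma has_roots_at_least_iff_liftable:
  assumes p: "p > 0"
  shows "has_roots_at_least p n a s \<longleftrightarrow>
    (\<exists>D. \<exists>T\<in>Pow {0..<int p ^ D}. card T = s \<and> (\<forall>t\<in>T. liftable p n a D t))"
proof
  assume "has_roots_at_least p n a s"
  then obtain X where X: "X \<subseteq> {x. is_zp_root p n a x}" "finite X" "card X = s"
    by (auto simp: has_roots_at_least_def)
  have digits: "\<forall>i. x i < p" if "x \<in> X" for x using X(1) that by (auto simp: is_zp_root_def)
  then obtain D where D: "\<forall>x\<in>X. \<forall>y\<in>X. \<forall>N\<ge>D. x \<noteq> y \<longrightarrow> \<not> int p ^ D dvd zp_trunc p y N - zp_trunc p x N"
    using exists_separating_modulus[OF X(2)] by blast
  have "inj_on (\<lambda>x. zp_trunc p x D) X"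
  proof (rule inj_onI, rule ccontr)
    fix x y assume "x \<in> X" "y \<in> X" "zp_trunc p x D = zp_trunc p y D" "x \<noteq> y"
    then show False using D by force
  qed
  then have "card ((\<lambda>x. zp_trunc p x D) ` X) = s" using X by (simp add: card_image)
  moreover have "(\<lambda>x. zp_trunc p x D) ` X \<in> Pow {0..<int p ^ D}"
    using digits zp_trunc_nonneg zp_trunc_less by fastforce
  moreover have "\<forall>t\<in>(\<lambda>x. zp_trunc p x D) ` X. liftable p n a D t"
    using liftable_zp_trunc_root X(1) by blast
  ultimately show "\<exists>D. \<exists>T\<in>Pow {0..<int p ^ D}. card T = s \<and> (\<forall>t\<in>T. liftable p n a D t)" by blast
next
  assume "\<exists>D. \<exists>T\<in>Pow {0..<int p ^ D}. card T = s \<and> (\<forall>t\<in>T. liftable p n a D t)"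
  then obtain D T where T: "T \<subseteq> {0..<int p ^ D}" "card T = s" "\<forall>t\<in>T. liftable p n a D t" by blast
  then have "\<forall>t\<in>T. \<exists>x. is_zp_root p n a x \<and> zp_trunc p x D = t"
    using liftable_imp_root[OF p] by fastforce
  then obtain root where root: "\<And>t. t \<in> T \<Longrightarrow> is_zp_root p n a (root t) \<and> zp_trunc p (root t) D = t"
    by metis
  have "inj_on root T" by (rule inj_onI) (metis root)
  moreover have "finite T" using T(1) finite_subset by blast
  ultimately show "has_roots_at_least p n a s"
    unfolding has_roots_at_least_def using root T(2) by (intro exI[of _ "root ` T"]) (auto simp: card_image)
qed

lemma pred_has_roots_at_least: "p > 0 \<Longrightarrow> Measurable.pred (coeff_measure p n) (\<lambda>a. has_roots_at_least p n a s)"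
  unfolding has_roots_at_least_iff_liftable
  by (intro pred_intros_countable pred_intros_finite(4) pred_intros_conj1' pred_intros_finite(3) pred_liftable)
    (auto intro: finite_subset)

lemma num_roots_eq_iff_has_roots_at_least:
  "num_roots p n a = r \<longleftrightarrow>
    (if r = 0 then \<not> has_roots_at_least p n a 1 \<or> (\<forall>s. has_roots_at_least p n a s)
     else has_roots_at_least p n a r \<and> \<not> has_roots_at_least p n a (Suc r))"
proof (cases "finite {x. is_zp_root p n a x}")
  case True
  have at_least: "has_roots_at_least p n a s \<longleftrightarrow> s \<le> num_roots p n a" for s
  proof
    assume "has_roots_at_least p n a s"
    then obtain X where "X \<subseteq> {x. is_zp_root p n a x}" "card X = s"
      by (auto simp: has_roots_at_least_def)
    then show "s \<le> num_roots p n a" using card_mono[OF True] by (auto simp: num_roots_def)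
  next
    assume "s \<le> num_roots p n a"
    then show "has_roots_at_least p n a s"
      using obtain_subset_with_card_n[of s "{x. is_zp_root p n a x}"] True
      by (auto simp: num_roots_def has_roots_at_least_def intro: finite_subset)
  qed
  have "\<not> (\<forall>s. has_roots_at_least p n a s)"
    using at_least[of "Suc (num_roots p n a)"] by auto
  then show ?thesis
    using at_least[of 1] at_least[of r] at_least[of "Suc r"] by (cases "r = 0") auto
next
  case False
  then have "has_roots_at_least p n a s" for s
    using infinite_arbitrarily_large[OF False, of s] by (auto simp: has_roots_at_least_def)
  then show ?thesis using False by (simp add: num_roots_def)
qed

lemma root_count_event_sets:
  assumes "p > 0"
  shows "{a \<in> space (coeff_measure p n). num_roots p n a = r} \<in> sets (coeff_measure p n)"
proof -
  have "Measurable.pred (coeff_measure p n) (\<lambda>a. num_roots p n a = r)"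
    unfolding num_roots_eq_iff_has_roots_at_least
    by (cases "r = 0") (simp_all add: pred_intros_logic pred_intros_countable pred_has_roots_at_least[OF assms])
  then show ?thesis by (simp add: pred_def)
qed

section \<open>Bounds for \<open>\<beta>*\<close> and the limit\<close>

lemma sum_lessThan_diff_eq: "(\<Sum>j<k. k - j) = (k choose 2) + (k::nat)"
proof (induct k)
  case (Suc k)
  have "(\<Sum>j<Suc k. Suc k - j) = (\<Sum>j<k. Suc k - j) + 1" by simp
  also have "(\<Sum>j<k. Suc k - j) = (\<Sum>j<k. (k - j) + 1)" by (intro sum.cong refl) auto
  also have "\<dots> = (\<Sum>j<k. k - j) + k" by (simp only: sum.distrib) simp
  also have "Suc k choose 2 = k + (k choose 2)" by (simp add: numeral_2_eq_2)
  ultimately show ?case using Suc by simp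
qed simp

lemma num_roots_0:
  assumes "p > 1"
  shows "num_roots p 0 a = 0"
proof -
  have "\<not> is_zp_root p 0 a x" for x
  proof
    assume "is_zp_root p 0 a x"
    then have "\<forall>k. int p ^ k dvd 1" by (simp add: is_zp_root_def)
    then have "int p dvd 1" by (metis power_one_right)
    then show False using assms by simp
  qed
  then show ?thesis by (simp add: num_roots_def)
qed

lemma beta_star_0: "p > 1 \<Longrightarrow> beta_star 0 0 p = 1"
  using prob_space.prob_space[OF prob_space_coeff_measure] by (simp add: beta_star_def num_roots_0)

lemma exists_distinct_roots:
  assumes "num_roots p n a = r"
  shows "\<exists>xs. distinct xs \<and> length xs = r \<and> (\<forall>x\<in>set xs. is_zp_root p n a x)"
proof (cases "r = 0")
  case False
  then have "finite {x. is_zp_root p n a x}"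
    using assms card.infinite unfolding num_roots_def by fastforce
  then obtain xs where xs: "set xs = {x. is_zp_root p n a x}" "distinct xs"
    using finite_distinct_list by blast
  then have "length xs = r" using assms by (simp add: num_roots_def flip: distinct_card)
  with xs show ?thesis by auto
qed simp

lemma mem_pattern_cylinder_iff:
  assumes "k \<le> n" "a \<in> space (coeff_measure p n)"
  shows "a \<in> pattern_cylinder n k c \<longleftrightarrow> low_digits_vanish k a \<and> (\<forall>j<k. a j (k - j) = c j)"
proof -
  have "a \<in> extensional {..<n}" using assms(2) by (simp add: space_coeff_measure PiE_iff)
  then have "a \<in> pattern_cylinder n k c \<longleftrightarrow> (\<forall>j<k. a j \<in> digit_cylinder k j (c j))"
    using assms(1) by (auto simp: pattern_cylinder_def PiE_iff)
  also have "\<dots> \<longleftrightarrow> low_digits_vanish k a \<and> (\<forall>j<k. a j (k - j) = c j)"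
    by (auto simp: digit_cylinder_def low_digits_vanish_def)
  finally show ?thesis .
qed

context
  fixes p n r k :: nat
  assumes prime: "prime p" and n: "n \<ge> 1" and r: "r \<le> n" "r = n \<or> r + 2 \<le> n" and k: "k = min (r + 1) n"
begin

lemma num_roots_on_splitting_event:
  assumes a: "a \<in> pattern_event n k (splitting_patterns p n r k)" "a \<in> space (coeff_measure p n)"
    and valid: "valid_coeffs p n a"
  shows "num_roots p n a = r"
proof -
  obtain \<gamma> B where \<gamma>: "\<gamma> \<in> (if r = n then {1} else {1..<int p})" and B: "B \<subseteq> {0..<int p}" "card B = r"
    and "a \<in> pattern_cylinder n k (residue_pattern p k (smult \<gamma> (\<Prod>b\<in>B. [:-b, 1:])))"
    using a(1) by (auto simp: pattern_event_def splitting_patterns_def)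
  then have low: "low_digits_vanish k a"
    and "\<forall>j<k. a j (k - j) = residue_pattern p k (smult \<gamma> (\<Prod>b\<in>B. [:-b, 1:])) j"
    using mem_pattern_cylinder_iff[OF _ a(2)] k by auto
  then have digits: "\<forall>j<k. int (a j (k - j)) = coeff (smult \<gamma> (\<Prod>b\<in>B. [:-b, 1:])) j mod int p"
    using residue_pattern_apply prime_gt_0_nat[OF prime] by simp
  have "finite B" "r = n \<Longrightarrow> \<gamma> = 1" using B finite_subset \<gamma> by auto
  then have "coeff (smult \<gamma> (\<Prod>b\<in>B. [:-b, 1:])) j = of_bool (k = n \<and> j = n)" if "k \<le> j" for j
    using coeff_splitting_poly_above[OF prime r k _ B(2) _ that] by blast
  then have "[:int p:] dvd pattern_poly n k a - smult \<gamma> (\<Prod>b\<in>B. [:-b, 1:])"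
    using digits k by (auto simp: const_poly_dvd_iff coeff_pattern_poly mod_eq_dvd_iff[symmetric] not_less
        simp del: coeff_smult)
  moreover have "\<not> int p dvd \<gamma>" using \<gamma> prime_gt_1_nat[OF prime] by (auto split: if_splits simp: zdvd_not_zless)
  ultimately show ?thesis
    using num_roots_eq_if_pattern_splits[OF prime _ _ valid low] k n B by simp
qed

lemma root_count_event_subset_root_patterns:
  assumes a: "a \<in> space (coeff_measure p n)" and valid: "valid_coeffs p n a" and roots: "num_roots p n a = r"
  shows "a \<in> pattern_event n k (root_patterns p n r k)"
proof -
  obtain xs where xs: "distinct xs" "length xs = r" "\<forall>x\<in>set xs. is_zp_root p n a x"
    using exists_distinct_roots[OF roots] by blast
  obtain \<gamma> \<beta>s where "low_digits_vanish k a" and \<gamma>: "\<gamma> \<in> (if r = n then {1} else {0..<int p})"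
    and \<beta>s: "length \<beta>s = r" "set \<beta>s \<subseteq> {0..<int p}"
    and digits: "\<forall>j<k. int (a j (k - j)) = coeff (smult \<gamma> (\<Prod>b\<leftarrow>\<beta>s. [:-b, 1:])) j mod int p"
    using digit_pattern_of_roots[OF prime n r k valid xs] by blast
  moreover have "\<forall>j<k. a j (k - j) = residue_pattern p k (smult \<gamma> (\<Prod>b\<leftarrow>\<beta>s. [:-b, 1:])) j"
    using digits by (simp add: residue_pattern_def) (metis nat_int)
  ultimately have "a \<in> pattern_cylinder n k (residue_pattern p k (smult \<gamma> (\<Prod>b\<leftarrow>\<beta>s. [:-b, 1:])))"
    using mem_pattern_cylinder_iff[OF _ a] k by simp
  with \<gamma> \<beta>s show ?thesis
    by (auto simp: pattern_event_def root_patterns_def intro!: bexI[of _ "residue_pattern p k _"])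
qed

lemma scaled_measure_pattern_event:
  assumes "S \<subseteq> {..<k} \<rightarrow>\<^sub>E {..<p}"
  shows "real p ^ (k choose 2) * measure (coeff_measure p n) (pattern_event n k S) = real (card S) / real p ^ k"
  using measure_pattern_event[OF prime_gt_0_nat[OF prime] assms] k prime_gt_0_nat[OF prime]
  by (simp add: sum_lessThan_diff_eq power_add field_simps power_one_over)

theorem scaled_beta_star_bounds:
  shows "real (card (splitting_patterns p n r k)) / real p ^ k \<le> real p ^ (k choose 2) * beta_star n r p"
    and "real p ^ (k choose 2) * beta_star n r p \<le> real (card (root_patterns p n r k)) / real p ^ k"
proof -
  let ?M = "coeff_measure p n"
  let ?E = "{a \<in> space ?M. num_roots p n a = r}"
  interpret prob_space ?M by (rule prob_space_coeff_measure)
  have E: "?E \<in> sets ?M" by (rule root_count_event_sets[OF prime_gt_0_nat[OF prime]])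
  have valid: "AE a in ?M. valid_coeffs p n a" by (rule AE_valid_coeffs[OF prime_gt_0_nat[OF prime]])
  have pattern_space: "pattern_event n k S \<subseteq> space ?M" for S
    by (auto simp: pattern_event_def pattern_cylinder_def space_coeff_measure PiE_iff)
  have finite_patterns: "finite S" if "S \<subseteq> {..<k} \<rightarrow>\<^sub>E {..<p}" for S
    using that by (rule finite_subset) (intro finite_PiE; simp)
  have "AE a in ?M. a \<in> pattern_event n k (splitting_patterns p n r k) \<longrightarrow> a \<in> ?E"
    using valid by eventually_elim (use num_roots_on_splitting_event pattern_space in blast)
  then have "measure ?M (pattern_event n k (splitting_patterns p n r k)) \<le> measure ?M ?E"
    by (intro finite_measure_mono_AE E)
  then have "real p ^ (k choose 2) * measure ?M (pattern_event n k (splitting_patterns p n r k))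
      \<le> real p ^ (k choose 2) * measure ?M ?E" by (rule mult_left_mono) simp
  then show "real (card (splitting_patterns p n r k)) / real p ^ k \<le> real p ^ (k choose 2) * beta_star n r p"
    using scaled_measure_pattern_event[OF splitting_patterns_subset[OF prime_gt_0_nat[OF prime], of n r k]]
    by (simp add: beta_star_def)
  have "AE a in ?M. a \<in> ?E \<longrightarrow> a \<in> pattern_event n k (root_patterns p n r k)"
    using valid by eventually_elim (use root_count_event_subset_root_patterns in blast)
  then have "measure ?M ?E \<le> measure ?M (pattern_event n k (root_patterns p n r k))"
    using finite_patterns[OF root_patterns_subset[OF prime_gt_0_nat[OF prime], of n r k]]
    by (intro finite_measure_mono_AE pattern_event_sets)
  then have "real p ^ (k choose 2) * measure ?M ?E
      \<le> real p ^ (k choose 2) * measure ?M (pattern_event n k (root_patterns p n r k))"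
    by (rule mult_left_mono) simp
  then show "real p ^ (k choose 2) * beta_star n r p \<le> real (card (root_patterns p n r k)) / real p ^ k"
    using scaled_measure_pattern_event[OF root_patterns_subset[OF prime_gt_0_nat[OF prime], of n r k]]
    by (simp add: beta_star_def)
qed


corollary scaled_beta_star_between:
  assumes "r \<le> p"
  shows "real ((if r = n then 1 else p - 1) * (p choose r)) / real p ^ k \<le> real p ^ (k choose 2) * beta_star n r p"
    and "real p ^ (k choose 2) * beta_star n r p
      \<le> real ((if r = n then 1 else p) * ((p choose r) + (p ^ r - \<Prod>{p - r + 1..p}))) / real p ^ k"
proof -
  show "real ((if r = n then 1 else p - 1) * (p choose r)) / real p ^ k \<le> real p ^ (k choose 2) * beta_star n r p"
    using scaled_beta_star_bounds(1) unfolding card_splitting_patterns[OF prime r k] .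
  have "real (card (root_patterns p n r k)) / real p ^ k
      \<le> real ((if r = n then 1 else p) * ((p choose r) + (p ^ r - \<Prod>{p - r + 1..p}))) / real p ^ k"
    by (rule divide_right_mono[OF of_nat_mono[OF card_root_patterns_le[OF assms, of n k]]]) simp
  with scaled_beta_star_bounds(2) show "real p ^ (k choose 2) * beta_star n r p
      \<le> real ((if r = n then 1 else p) * ((p choose r) + (p ^ r - \<Prod>{p - r + 1..p}))) / real p ^ k"
    by (rule order_trans)
qed
end

lemma real_diff_one_over_tendsto: "(\<lambda>p. real (p - 1) / real p) \<longlonglongrightarrow> 1"
proof -
  have "(\<lambda>p. 1 - 1 / real p) \<longlonglongrightarrow> 1 - 0"
    by (intro tendsto_diff tendsto_const tendsto_divide_0[OF tendsto_const]
        filterlim_at_top_imp_at_infinity[OF filterlim_real_sequentially])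
  moreover have "\<forall>\<^sub>F p in sequentially. 1 - 1 / real p = real (p - 1) / real p"
    using eventually_ge_at_top[of 1] by eventually_elim (simp add: of_nat_diff field_simps)
  ultimately show ?thesis by (simp add: Lim_transform_eventually)
qed

lemma root_pattern_bound_over_power_tendsto:
  "(\<lambda>p. real ((p choose r) + (p ^ r - \<Prod>{p - r + 1..p})) / real p ^ r) \<longlonglongrightarrow> 1 / fact r"
proof -
  have "(\<lambda>p. real (p choose r) / real p ^ r + (1 - real (\<Prod>{p - r + 1..p}) / real p ^ r)) \<longlonglongrightarrow> 1 / fact r + (1 - 1)"
    by (intro tendsto_add tendsto_diff binomial_over_power_tendsto falling_product_over_power_tendsto tendsto_const)
  moreover have "\<forall>\<^sub>F p in sequentially. real (p choose r) / real p ^ r + (1 - real (\<Prod>{p - r + 1..p}) / real p ^ r)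
      = real ((p choose r) + (p ^ r - \<Prod>{p - r + 1..p})) / real p ^ r"
    using eventually_ge_at_top[of "Suc r"]
  proof eventually_elim
    case (elim p)
    then have "\<Prod>{p - r + 1..p} \<le> p ^ r" by (intro falling_product_bounds(2)) simp
    then have "real ((p choose r) + (p ^ r - \<Prod>{p - r + 1..p})) = real (p choose r) + real p ^ r - real (\<Prod>{p - r + 1..p})"
      by (simp add: of_nat_diff)
    then show ?case using elim by (simp add: field_simps)
  qed
  ultimately show ?thesis by (simp add: Lim_transform_eventually)
qed

context
  fixes n r k :: nat
  assumes r: "r \<le> n" "r = n \<or> r + 2 \<le> n" and k: "k = min (r + 1) n"
begin

lemma splitting_count_over_power_tendsto:
  "(\<lambda>p. real ((if r = n then 1 else p - 1) * (p choose r)) / real p ^ k) \<longlonglongrightarrow> 1 / fact r"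
proof (cases "r = n")
  case False
  then have k: "k = r + 1" using r k by auto
  have "(\<lambda>p. (real (p - 1) / real p) * (real (p choose r) / real p ^ r)) \<longlonglongrightarrow> 1 * (1 / fact r)"
    by (intro tendsto_mult real_diff_one_over_tendsto binomial_over_power_tendsto)
  moreover have "\<forall>\<^sub>F p in sequentially. (real (p - 1) / real p) * (real (p choose r) / real p ^ r)
      = real ((if r = n then 1 else p - 1) * (p choose r)) / real p ^ k"
    using eventually_ge_at_top[of 1] by eventually_elim (use False k in simp)
  ultimately show ?thesis by (simp add: Lim_transform_eventually)
qed (use k binomial_over_power_tendsto in simp)

lemma root_pattern_count_over_power_tendsto:
  "(\<lambda>p. real ((if r = n then 1 else p) * ((p choose r) + (p ^ r - \<Prod>{p - r + 1..p}))) / real p ^ k)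
     \<longlonglongrightarrow> 1 / fact r"
proof (cases "r = n")
  case False
  then have k: "k = r + 1" using r k by auto
  have "\<forall>\<^sub>F p in sequentially. real ((p choose r) + (p ^ r - \<Prod>{p - r + 1..p})) / real p ^ r
     = real ((if r = n then 1 else p) * ((p choose r) + (p ^ r - \<Prod>{p - r + 1..p}))) / real p ^ k"
    using eventually_ge_at_top[of 1] by eventually_elim (use False k in simp)
  with root_pattern_bound_over_power_tendsto show ?thesis by (rule Lim_transform_eventually)
qed (use k root_pattern_bound_over_power_tendsto in simp)

end

theorem scaled_beta_star_tendsto:
  assumes n: "n \<ge> 1" and r: "r \<le> n" "r = n \<or> r + 2 \<le> n"
  shows "((\<lambda>p. real p ^ (min (r + 1) n choose 2) * beta_star n r p) \<longlongrightarrow> 1 / fact r)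
    (inf at_top (principal {p. prime p}))"
proof -
  define k where "k = min (r + 1) n"
  define lower where "lower p = real ((if r = n then 1 else p - 1) * (p choose r)) / real p ^ k" for p
  define upper where
    "upper p = real ((if r = n then 1 else p) * ((p choose r) + (p ^ r - \<Prod>{p - r + 1..p}))) / real p ^ k" for p
  let ?F = "inf at_top (principal {p. prime p})"
  have "\<forall>\<^sub>F p in ?F. prime p \<and> r \<le> p"
    unfolding eventually_inf_principal using eventually_ge_at_top[of r] by eventually_elim simp
  then have bounds: "\<forall>\<^sub>F p in ?F. lower p \<le> real p ^ (k choose 2) * beta_star n r p
      \<and> real p ^ (k choose 2) * beta_star n r p \<le> upper p"
    unfolding lower_def upper_def
    by eventually_elim (use scaled_beta_star_between[of _ n r k] n r k_def in blast)
  have F: "?F \<le> sequentially" by simp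
  have "(lower \<longlongrightarrow> 1 / fact r) ?F"
    unfolding lower_def[abs_def] by (rule tendsto_mono[OF F splitting_count_over_power_tendsto[OF r k_def]])
  moreover have "(upper \<longlongrightarrow> 1 / fact r) ?F"
    unfolding upper_def[abs_def] by (rule tendsto_mono[OF F root_pattern_count_over_power_tendsto[OF r k_def]])
  moreover have "\<forall>\<^sub>F p in ?F. lower p \<le> real p ^ (k choose 2) * beta_star n r p"
    "\<forall>\<^sub>F p in ?F. real p ^ (k choose 2) * beta_star n r p \<le> upper p"
    using bounds by (simp_all add: eventually_conj_iff)
  ultimately have "((\<lambda>p. real p ^ (k choose 2) * beta_star n r p) \<longlongrightarrow> 1 / fact r) ?F"
    by (blast intro: tendsto_sandwich)
  then show ?thesis by (simp add: k_def)
qed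

theorem proposition1p2:
  fixes n r :: nat
  assumes "r \<le> n" and "int r \<noteq> int n - 1"
  shows "filterlim (\<lambda>p. real p ^ (min (r + 1) n choose 2) * beta_star n r p)
           (nhds (1 / fact r)) (inf at_top (principal {p. prime p}))"
proof (cases "n = 0")
  case True
  then have "\<forall>\<^sub>F p in inf at_top (principal {p. prime p}). real p ^ (min (r + 1) n choose 2) * beta_star n r p = 1"
    unfolding eventually_inf_principal using assms
    by (intro always_eventually allI impI) (simp add: beta_star_0[OF prime_gt_1_nat] numeral_2_eq_2)
  then show ?thesis using assms True by (simp add: tendsto_eventually)
next
  case False
  moreover have "r = n \<or> r + 2 \<le> n" using assms by auto
  ultimately show ?thesis using scaled_beta_star_tendsto[of n r] assms(1) by simp
qed

end
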